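(* Let $N \to \infty$, and for each $N$ let $\lambda_1 < \lambda_2 < \dots < \lambda_N$ be pairwise coprime positive integers such that, for a fixed constant $c\in(0,1)$, $\lambda_1$ is of order $N^c$ and $\lambda_N = O(N^{1+c})$. Let $1 \le K \le N$ with $K/N \to \rho \in (0,1)$, and let $R = \prod_{i=1}^N \lambda_i$, $R_\ell = \prod_{i=1}^K \lambda_i$. Suppose $\epsilon \leq \frac{(1-\rho)c}{(1+c)^2}$. Then there exist (i) a binary neural network with quadratic threshold functions on $O(N\log N)$ neurons, and (ii) a binary neural network with linear threshold functions on $O(N^{2+2c}\log N)$ neurons, each of which takes as input the noisy grid code $\phi'(x)$ of a location $x \in \{0,1,\dots,R_\ell-1\}$ and outputs $x$ (equivalently the codeword $\phi(x)$) with probability tending to $1$ as $N\to\infty$; i.e. they are decoders of the discrete grid cell code with asymptotically zero error.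
   Context: Discrete grid cell code: for integer $x$, $\phi(x) = (x \bmod \lambda_1, \dots, x \bmod \lambda_N)$; the codewords are $\{\phi(x) : x \in [0, R_\ell - 1]\}$. The noisy version $\phi'(x)$ is obtained by perturbing each coordinate independently: $\phi'_i(x) = \phi_i(x)$ with probability $1-\epsilon$, and $\phi'_i(x)$ is uniform on $\{0,\dots,\lambda_i-1\}$ with probability $\epsilon$. A binary neural network has neuron states in $\{0,1\}$, updated by the rule $\mathbf{x}_i \leftarrow 1$ if $f_i(\mathbf{x}) > \theta_i$ and $0$ otherwise, where $f_i$ is either linear, $f_i(\mathbf{x}) = \sum_j w_{ij}\mathbf{x}_j$ (linear threshold function), or quadratic, $f_i(\mathbf{x}) = \sum_{j,k} w_{ijk}\mathbf{x}_j\mathbf{x}_k + \sum_j w_{ij}\mathbf{x}_j$ (quadratic threshold function). The $i$-th input coordinate $\phi'_i(x)$ is treated as a single input unit taking one of $\lambda_i$ possible values. *)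

theory Defs
  imports "HOL-Probability.Probability"
begin

text \<open>Moduli are indexed from 0: lam i for i < N stands for lambda_(i+1).
  A received word is a function u :: nat => nat, coordinate i < N being phi'_i(x).\<close>

definition grid_code :: "(nat \<Rightarrow> nat) \<Rightarrow> nat \<Rightarrow> nat \<Rightarrow> nat" where
  "grid_code lam x = (\<lambda>i. x mod lam i)"

definition noisy_coord :: "real \<Rightarrow> nat \<Rightarrow> nat \<Rightarrow> nat pmf" where
  "noisy_coord eps l v =
     bind_pmf (bernoulli_pmf eps) (\<lambda>b. if b then pmf_of_set {..<l} else return_pmf v)"

definition noisy_code :: "real \<Rightarrow> nat \<Rightarrow> (nat \<Rightarrow> nat) \<Rightarrow> nat \<Rightarrow> (nat \<Rightarrow> nat) pmf" where
  "noisy_code eps N lam x =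
     Pi_pmf {..<N} 0 (\<lambda>i. noisy_coord eps (lam i) (grid_code lam x i))"

text \<open>Units are the N input units Inl j (j < N), carrying the integer value of the
  j-th input coordinate, and the neurons Inr k (k < nn), carrying states 0/1.
  Neuron k computes f_k(z) = sum_{a,b} W2 k a b z_a z_b + sum_a W1 k a z_a and
  becomes 1 iff f_k(z) > thr k.\<close>

record bnn =
  nn :: nat
  W2 :: "nat \<Rightarrow> nat + nat \<Rightarrow> nat + nat \<Rightarrow> real"
  W1 :: "nat \<Rightarrow> nat + nat \<Rightarrow> real"
  thr :: "nat \<Rightarrow> real"
  steps :: nat
  outs :: "nat list"

definition units :: "nat \<Rightarrow> bnn \<Rightarrow> (nat + nat) set" where
  "units N net = Inl ` {..<N} \<union> Inr ` {..<nn net}"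

definition activation :: "(nat \<Rightarrow> nat) \<Rightarrow> (nat \<Rightarrow> bool) \<Rightarrow> nat + nat \<Rightarrow> real" where
  "activation u s a = (case a of Inl j \<Rightarrow> real (u j) | Inr k \<Rightarrow> (if s k then 1 else 0))"

definition field :: "nat \<Rightarrow> bnn \<Rightarrow> nat \<Rightarrow> (nat + nat \<Rightarrow> real) \<Rightarrow> real" where
  "field N net k z =
     (\<Sum>a\<in>units N net. \<Sum>b\<in>units N net. W2 net k a b * z a * z b)
     + (\<Sum>a\<in>units N net. W1 net k a * z a)"

definition bnn_step :: "nat \<Rightarrow> bnn \<Rightarrow> (nat \<Rightarrow> nat) \<Rightarrow> (nat \<Rightarrow> bool) \<Rightarrow> (nat \<Rightarrow> bool)" where
  "bnn_step N net u s = (\<lambda>k. k < nn net \<and> field N net k (activation u s) > thr net k)"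

definition bnn_run :: "nat \<Rightarrow> bnn \<Rightarrow> (nat \<Rightarrow> nat) \<Rightarrow> (nat \<Rightarrow> bool)" where
  "bnn_run N net u = (bnn_step N net u ^^ steps net) (\<lambda>_. False)"

definition bnn_output :: "nat \<Rightarrow> bnn \<Rightarrow> (nat \<Rightarrow> nat) \<Rightarrow> nat" where
  "bnn_output N net u =
     (\<Sum>j<length (outs net). if bnn_run N net u (outs net ! j) then 2 ^ j else 0)"

text \<open>Linear threshold network: all quadratic weights vanish.
  Every network is a quadratic threshold network.\<close>
definition linear_bnn :: "bnn \<Rightarrow> bool" where
  "linear_bnn net \<longleftrightarrow> (\<forall>k a b. W2 net k a b = 0)"

definition success_prob :: "real \<Rightarrow> nat \<Rightarrow> (nat \<Rightarrow> nat) \<Rightarrow> bnn \<Rightarrow> nat \<Rightarrow> real" where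
  "success_prob eps N lam net x =
     measure_pmf.prob (noisy_code eps N lam x) {u. bnn_output N net u = x}"

end

theory Submission
  imports Defs "HOL-Number_Theory.Cong" "HOL-Library.Log_Nat" "HOL-Real_Asymp.Real_Asymp"
begin

text \<open>
  Minimum-distance decoding. If \<open>y < x < R\<^sub>l\<close>, the moduli on which the codewords of \<open>x\<close> and
  \<open>y\<close> agree have a product dividing \<open>x - y\<close>, whereas any \<open>K\<close> of the increasing moduli have
  product at least \<open>R\<^sub>l\<close>; so the two codewords agree in fewer than \<open>K\<close> coordinates. Hence, if at
  most \<open>\<tau> = (N - K) div 2\<close> coordinates of the received word are corrupted, \<open>x\<close> is the least \<open>t\<close>
  whose codeword differs from it in at most \<open>\<tau>\<close> coordinates. By Hoeffding's inequality more than
  \<open>\<tau>\<close> corruptions occur with probability at most \<open>exp (-2 (\<tau> + 1 - \<epsilon>N)\<^sup>2 / N)\<close>, and this tends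
  to 0 because the hypothesis on \<open>\<epsilon>\<close> gives \<open>\<epsilon> < (1 - \<rho>) / 2\<close>.

  The network finds this least \<open>t\<close> by brute force. A clock runs through \<open>t = 0, 1, 2, \<dots>\<close>, keeping
  \<open>t mod \<lambda>\<^sub>j\<close> in one counter per modulus: in binary with quadratic neurons (\<open>O(log \<lambda>\<^sub>N)\<close>
  neurons each), in unary with linear ones (\<open>\<lambda>\<^sub>N\<close> neurons each). Comparator neurons count
  the coordinates in which the input differs from the counters, a pulse neuron fires at the first
  time this count is at most \<open>\<tau>\<close>, and snapshot neurons latch the counters at that moment.
  The latched residues are recombined by the Chinese remainder theorem, and the reduction modulo
  \<open>R\<^sub>l\<close> is carried out by greedy bit-by-bit division, whose remainder bits are the output.
\<close>

section \<open>Counting corrupted coordinates\<close>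

definition code_distance :: "nat \<Rightarrow> (nat \<Rightarrow> nat) \<Rightarrow> (nat \<Rightarrow> nat) \<Rightarrow> nat \<Rightarrow> nat" where
  "code_distance N lam u t = card {j\<in>{..<N}. u j \<noteq> t mod lam j}"

lemma noisy_coord_prob_neq:
  assumes "0 \<le> eps" "eps \<le> 1" "0 < l"
  shows "measure_pmf.prob (noisy_coord eps l v) {w. w \<noteq> v} \<le> eps"
proof -
  have "pmf (noisy_coord eps l v) v = eps * pmf (pmf_of_set {..<l}) v + (1 - eps)"
    unfolding noisy_coord_def pmf_bind using assms by (simp add: integral_bernoulli_pmf)
  hence "1 - eps \<le> pmf (noisy_coord eps l v) v" using assms by simp
  moreover have "{w. w \<noteq> v} = UNIV - {v}" by auto
  ultimately show ?thesis
    using measure_pmf.prob_compl[of "{v}" "noisy_coord eps l v"] by (simp add: measure_pmf_single)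
qed

lemma noisy_code_prob_neq:
  assumes eps: "0 \<le> eps" "eps \<le> 1" and i: "i < N" "0 < lam i"
  shows "measure_pmf.prob (noisy_code eps N lam x) {u. u i \<noteq> x mod lam i} \<le> eps"
proof -
  have "measure_pmf.prob (noisy_code eps N lam x) {u. u i \<noteq> x mod lam i}
      = measure_pmf.prob (map_pmf (\<lambda>u. u i) (noisy_code eps N lam x)) {w. w \<noteq> x mod lam i}"
    by simp
  also have "map_pmf (\<lambda>u. u i) (noisy_code eps N lam x) = noisy_coord eps (lam i) (x mod lam i)"
    using i by (simp add: noisy_code_def Pi_pmf_component grid_code_def)
  finally show ?thesis using noisy_coord_prob_neq[OF eps i(2)] by simp
qed

lemma noisy_code_distance_tail:
  fixes eps :: real and \<tau> :: nat
  assumes eps: "0 \<le> eps" "eps \<le> 1" and lam: "\<forall>j<N. 0 < lam j" and "0 < N"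
    and margin: "eps * N \<le> real \<tau> + 1"
  shows "measure_pmf.prob (noisy_code eps N lam x) {u. \<tau> < code_distance N lam u x}
         \<le> exp (-2 * (real \<tau> + 1 - eps * N)\<^sup>2 / N)"
proof -
  define M where "M = noisy_code eps N lam x"
  define X :: "nat \<Rightarrow> (nat \<Rightarrow> nat) \<Rightarrow> real"
    where "X i u = indicator {w. w \<noteq> x mod lam i} (u i)" for i u
  interpret Hoeffding_ineq "measure_pmf M" "{..<N}" X "\<lambda>_. 0" "\<lambda>_. 1"
      "\<Sum>i<N. measure_pmf.expectation M (X i)"
  proof unfold_locales
    show "prob_space.indep_vars (measure_pmf M) (\<lambda>_. borel) X {..<N}"
      unfolding M_def noisy_code_def X_def
      by (intro prob_space.indep_vars_compose2[OF _ indep_vars_Pi_pmf])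
         (auto simp: measure_pmf.prob_space_axioms)
  qed (auto simp: X_def)
  have "X i = indicator {u. u i \<noteq> x mod lam i}" for i
    by (auto simp: X_def indicator_def)
  hence "(\<Sum>i<N. measure_pmf.expectation M (X i)) \<le> (\<Sum>i<N. eps)"
    using noisy_code_prob_neq[OF eps] lam by (intro sum_mono) (simp add: M_def)
  hence mean: "(\<Sum>i<N. measure_pmf.expectation M (X i)) \<le> eps * N" by (simp add: mult.commute)
  have "(\<Sum>i<N. X i u) = real (code_distance N lam u x)" for u
    unfolding X_def code_distance_def by (simp add: indicator_def Int_def)
  hence "measure_pmf.prob M {u. \<tau> < code_distance N lam u x} \<le> measure_pmf.prob M
      {u\<in>space (measure_pmf M). (\<Sum>i<N. X i u) \<ge> (\<Sum>i<N. measure_pmf.expectation M (X i)) + (real \<tau> + 1 - eps * N)}"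
    using mean by (intro measure_pmf.finite_measure_mono) auto
  also have "\<dots> \<le> exp (-2 * (real \<tau> + 1 - eps * N)\<^sup>2 / (\<Sum>i<N. (1 - 0)\<^sup>2))"
    by (rule Hoeffding_ineq_ge) (use margin \<open>0 < N\<close> in auto)
  finally show ?thesis by (simp add: M_def)
qed

section \<open>Minimum-distance decoding\<close>

lemma prod_lessThan_le_prod_subset:
  fixes lam :: "nat \<Rightarrow> nat"
  assumes mono: "\<And>i j. i \<le> j \<Longrightarrow> j < N \<Longrightarrow> lam i \<le> lam j"
    and pos: "\<And>i. i < N \<Longrightarrow> 0 < lam i"
  shows "S \<subseteq> {..<N} \<Longrightarrow> k \<le> card S \<Longrightarrow> (\<Prod>i<k. lam i) \<le> prod lam S"
proof (induction k arbitrary: S)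
  case 0
  have "1 \<le> prod lam S" using 0 pos by (intro prod_ge_1) (auto simp: Suc_le_eq)
  thus ?case by simp
next
  case (Suc k)
  have fin: "finite S" using Suc.prems finite_subset by blast
  define m where "m = Max S"
  have "S \<noteq> {}" using Suc.prems by auto
  hence m: "m \<in> S" using fin by (simp add: m_def)
  have "S \<subseteq> {..m}" using fin by (auto simp: m_def)
  hence "card S \<le> Suc m" using card_mono[of "{..m}" S] by simp
  hence "k \<le> m" using Suc.prems by simp
  hence "lam k \<le> lam m" using mono m Suc.prems by auto
  moreover have "(\<Prod>i<k. lam i) \<le> prod lam (S - {m})"
    using Suc.IH[of "S - {m}"] Suc.prems m fin by fastforce
  ultimately have "(\<Prod>i<Suc k. lam i) \<le> lam m * prod lam (S - {m})"
    by (simp add: mult_mono mult.commute)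
  also have "\<dots> = prod lam S" using fin m by (simp add: prod.remove)
  finally show ?case .
qed

lemma card_agreeing_residues_less:
  fixes lam :: "nat \<Rightarrow> nat"
  assumes incr: "\<And>i j. i < j \<Longrightarrow> j < N \<Longrightarrow> lam i < lam j"
    and pos: "\<And>i. i < N \<Longrightarrow> 0 < lam i"
    and copr: "\<And>i j. i < N \<Longrightarrow> j < N \<Longrightarrow> i \<noteq> j \<Longrightarrow> coprime (lam i) (lam j)"
    and yx: "y < x" "x < (\<Prod>i<K. lam i)"
  shows "card {j\<in>{..<N}. y mod lam j = x mod lam j} < K"
proof (rule ccontr)
  define S where "S = {j\<in>{..<N}. y mod lam j = x mod lam j}"
  assume "\<not> card {j\<in>{..<N}. y mod lam j = x mod lam j} < K"
  hence "K \<le> card S" by (simp add: S_def)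
  hence "(\<Prod>i<K. lam i) \<le> prod lam S"
    using incr by (intro prod_lessThan_le_prod_subset[OF _ pos]) (auto simp: S_def le_less)
  moreover have "[y = x] (mod prod lam S)"
    using copr by (intro coprime_cong_prod_nat) (auto simp: S_def cong_def)
  hence "prod lam S dvd x - y"
    using yx by (simp add: cong_sym_eq cong_altdef_nat)
  hence "prod lam S \<le> x - y" using yx by (intro dvd_imp_le) auto
  ultimately show False using yx by linarith
qed

lemma code_distance_gt_if_close:
  fixes lam :: "nat \<Rightarrow> nat"
  assumes incr: "\<And>i j. i < j \<Longrightarrow> j < N \<Longrightarrow> lam i < lam j"
    and pos: "\<And>i. i < N \<Longrightarrow> 0 < lam i"
    and copr: "\<And>i j. i < N \<Longrightarrow> j < N \<Longrightarrow> i \<noteq> j \<Longrightarrow> coprime (lam i) (lam j)"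
    and yx: "y < x" "x < (\<Prod>i<K. lam i)"
    and \<tau>: "2 * \<tau> \<le> N - K" "K \<le> N"
    and close: "code_distance N lam u x \<le> \<tau>"
  shows "\<tau> < code_distance N lam u y"
proof -
  define A where "A = {j\<in>{..<N}. y mod lam j = x mod lam j}"
  define B where "B = {j\<in>{..<N}. u j \<noteq> x mod lam j}"
  define C where "C = {j\<in>{..<N}. u j \<noteq> y mod lam j}"
  have "{..<N} \<subseteq> A \<union> B \<union> C" by (auto simp: A_def B_def C_def)
  hence "N \<le> card (A \<union> B \<union> C)"
    using card_mono[of "A \<union> B \<union> C" "{..<N}"] by (simp add: A_def B_def C_def)
  also have "\<dots> \<le> card A + card B + card C"
    by (metis card_Un_le add_le_mono1 le_trans)
  finally have "N \<le> card A + card B + card C" .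
  moreover have "card A < K" unfolding A_def by (rule card_agreeing_residues_less[OF incr pos copr yx])
  ultimately show ?thesis using close \<tau> by (simp add: code_distance_def B_def C_def)
qed

section \<open>Finite sums and binary digits\<close>

lemma sum_shift_lessThan: "(\<Sum>k\<in>{lo..<lo + len}. h k) = (\<Sum>i<len. h (lo + i :: nat))"
  by (simp add: sum.atLeastLessThan_shift_0 atLeast0LessThan)

lemma sum_lessThan_mult_blocks: "(\<Sum>t<K * W. f t) = (\<Sum>i<K. \<Sum>k<W. f (i * W + k :: nat))"
  by (simp flip: sum.nat_group add: sum_shift_lessThan)

lemma block_index_less: "j < (n::nat) \<Longrightarrow> i < W \<Longrightarrow> j * W + i < n * W"
proof -
  assume "j < n" "i < W"
  hence "j * W + i < Suc j * W" by simp
  also have "\<dots> \<le> n * W" using \<open>j < n\<close> by (intro mult_le_mono1) simp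
  finally show ?thesis .
qed

lemma Suc_mod_eq: "2 \<le> l \<Longrightarrow> Suc t mod l = (if t mod l = l - 1 then 0 else t mod l + 1)"
  by (auto simp: mod_Suc)

lemma sum_lower_pairs:
  fixes b :: "nat \<Rightarrow> 'a::comm_ring_1"
  assumes "i < W"
  shows "(\<Sum>i1<W. \<Sum>i2<W. (if i1 = i \<and> i2 < i then c else 0) * b i1 * b i2) = c * b i * (\<Sum>i'<i. b i')"
proof -
  have "(\<Sum>i1<W. \<Sum>i2<W. (if i1 = i \<and> i2 < i then c else 0) * b i1 * b i2)
     = (\<Sum>i1<W. if i1 = i then (\<Sum>i2<W. (if i2 < i then c else 0) * b i1 * b i2) else 0)"
    by (intro sum.cong) auto
  also have "\<dots> = (\<Sum>i2<W. if i2 < i then c * b i * b i2 else 0)"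
    using assms by (subst sum.delta) (auto intro: sum.cong)
  also have "\<dots> = (\<Sum>i2<i. c * b i * b i2)"
    using assms by (intro sum.mono_neutral_cong_right) auto
  finally show ?thesis by (simp add: sum_distrib_left)
qed

lemma sum_lower_weights:
  fixes b :: "nat \<Rightarrow> 'a::comm_ring_1"
  assumes "i < W"
  shows "(\<Sum>i'<W. (if i' = i then a else if i' < i then 1 else 0) * b i') = a * b i + (\<Sum>i'<i. b i')"
proof -
  have "(\<Sum>i'<W. (if i' = i then a else if i' < i then 1 else 0) * b i')
      = (\<Sum>i'<W. (if i' = i then a * b i' else 0) + (if i' < i then b i' else 0))"
    by (intro sum.cong) auto
  also have "\<dots> = a * b i + (\<Sum>i'<i. b i')"
  proof -
    have "(\<Sum>i'<W. if i' = i then a * b i' else 0) = a * b i"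
      using assms by (subst sum.delta) auto
    moreover have "(\<Sum>i'<W. if i' < i then b i' else 0) = (\<Sum>i'<i. b i')"
      using assms by (intro sum.mono_neutral_cong_right) auto
    ultimately show ?thesis by (simp add: sum.distrib)
  qed
  finally show ?thesis .
qed

lemma sum_bits_nat: "(n::nat) < 2 ^ k \<Longrightarrow> (\<Sum>i<k. if bit n i then 2 ^ i else 0) = n"
proof -
  assume "n < 2 ^ k"
  have "n = horner_sum of_bool 2 (map (bit n) [0..<k])"
    using \<open>n < 2 ^ k\<close> by (simp add: horner_sum_bit_eq_take_bit take_bit_nat_eq_self)
  also have "\<dots> = (\<Sum>i<k. if bit n i then 2 ^ i else 0)"
    unfolding horner_sum_eq_sum by (intro sum.cong) auto
  finally show ?thesis by simp
qed

lemma sum_bits: "(n::nat) < 2 ^ k \<Longrightarrow> (\<Sum>i<k. 2 ^ i * of_bool (bit n i)) = (real n :: real)"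
proof -
  assume "n < 2 ^ k"
  have "(\<Sum>i<k. 2 ^ i * of_bool (bit n i)) = real (\<Sum>i<k. if bit n i then 2 ^ i else 0)"
    unfolding of_nat_sum by (intro sum.cong) auto
  thus ?thesis using sum_bits_nat[OF \<open>n < 2 ^ k\<close>] by simp
qed

lemma mod_two_pow_Suc: "(n::nat) mod 2 ^ Suc i = n mod 2 ^ i + 2 ^ i * (n div 2 ^ i mod 2)"
  using mod_mult2_eq[of n "2 ^ i" 2] by (simp add: mult.commute)

lemma low_bits_set_iff: "(\<forall>i'<i. bit (n::nat) i') \<longleftrightarrow> n mod 2 ^ i = 2 ^ i - 1"
proof (induction i)
  case (Suc i)
  have e: "n mod 2 ^ Suc i = n mod 2 ^ i + 2 ^ i * (n div 2 ^ i mod 2)" by (rule mod_two_pow_Suc)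
  have lt: "n mod 2 ^ i < 2 ^ i" by simp
  have "(\<forall>i'<Suc i. bit n i') \<longleftrightarrow> n mod 2 ^ i = 2 ^ i - 1 \<and> n div 2 ^ i mod 2 = 1"
    using Suc.IH by (auto simp: less_Suc_eq bit_iff_odd odd_iff_mod_2_eq_one)
  also have "\<dots> \<longleftrightarrow> n mod 2 ^ Suc i = 2 ^ Suc i - 1"
  proof -
    have p: "(2::nat) ^ Suc i = 2 ^ i + 2 ^ i" and p1: "(1::nat) \<le> 2 ^ i" by simp_all
    have "n div 2 ^ i mod 2 = 0 \<or> n div 2 ^ i mod 2 = 1" by auto
    thus ?thesis
    proof
      assume "n div 2 ^ i mod 2 = 0" thus ?thesis using e lt p p1 by (simp; linarith)
    next
      assume "n div 2 ^ i mod 2 = 1" thus ?thesis using e lt p p1 by (simp; linarith)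
    qed
  qed
  finally show ?case .
qed simp

lemma Suc_div_two_pow:
  "((n::nat) + 1) div 2 ^ i = n div 2 ^ i + (if n mod 2 ^ i = 2 ^ i - 1 then 1 else 0)"
proof -
  define a r where "a = n div 2 ^ i" and "r = n mod 2 ^ i"
  have n: "n + 1 = (r + 1) + 2 ^ i * a" by (simp add: a_def r_def)
  have "r < 2 ^ i" by (simp add: r_def)
  hence "(r + 1) div 2 ^ i = (if r = 2 ^ i - 1 then 1 else 0)" by auto
  moreover have "(n + 1) div 2 ^ i = (r + 1) div 2 ^ i + a" unfolding n by (subst div_mult_self2) auto
  ultimately show ?thesis by (simp add: a_def r_def)
qed

lemma bit_Suc_iff: "bit ((n::nat) + 1) i \<longleftrightarrow> (bit n i \<noteq> (n mod 2 ^ i = 2 ^ i - 1))"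
  unfolding bit_iff_odd Suc_div_two_pow by auto

lemma two_pow_le_mod_iff_bit: "(2::nat) ^ b \<le> n mod 2 ^ (b + 1) \<longleftrightarrow> bit n b"
proof -
  have e: "n mod 2 ^ (b + 1) = n mod 2 ^ b + 2 ^ b * (n div 2 ^ b mod 2)"
    using mod_two_pow_Suc[of n b] by simp
  have lt: "n mod 2 ^ b < 2 ^ b" by simp
  have "n div 2 ^ b mod 2 = 0 \<or> n div 2 ^ b mod 2 = 1" by auto
  thus ?thesis
  proof
    assume "n div 2 ^ b mod 2 = 0"
    thus ?thesis using e by (simp add: bit_iff_odd odd_iff_mod_2_eq_one not_le)
  next
    assume "n div 2 ^ b mod 2 = 1"
    thus ?thesis using e lt by (simp add: bit_iff_odd odd_iff_mod_2_eq_one)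
  qed
qed

lemma sum_high_bits:
  assumes n: "(n::nat) < 2 ^ k" and b: "b < k"
  shows "(\<Sum>b'<k. if b < b' then 2 ^ b' * of_bool (bit n b') else 0)
       = (2::real) ^ (b + 1) * real (n div 2 ^ (b + 1))"
proof -
  define h where "h = n div 2 ^ (b + 1)"
  have "(2::nat) ^ k = 2 ^ (k - (b + 1) + (b + 1))" using b by simp
  hence "(2::nat) ^ k = 2 ^ (k - (b + 1)) * 2 ^ (b + 1)" by (simp only: power_add)
  hence "h < 2 ^ (k - (b + 1))" using n by (simp add: h_def less_mult_imp_div_less)
  hence h: "(\<Sum>c<k - (b + 1). 2 ^ c * of_bool (bit h c)) = real h"
    by (rule sum_bits)
  have bit_h: "bit h c = bit n (b + 1 + c)" for c
    by (simp add: h_def bit_iff_odd div_mult2_eq power_add mult.commute)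
  have "(\<Sum>b'<k. if b < b' then 2 ^ b' * of_bool (bit n b') else (0::real))
      = (\<Sum>b'\<in>{b + 1..<b + 1 + (k - (b + 1))}. 2 ^ b' * of_bool (bit n b'))"
    using b by (intro sum.mono_neutral_cong_right) auto
  also have "\<dots> = (\<Sum>c<k - (b + 1). 2 ^ (b + 1 + c) * of_bool (bit n (b + 1 + c)))"
    by (rule sum_shift_lessThan)
  also have "\<dots> = 2 ^ (b + 1) * (\<Sum>c<k - (b + 1). 2 ^ c * of_bool (bit h c))"
    by (simp add: sum_distrib_left power_add bit_h mult_ac del: sum_mult_of_bool_eq)
  finally show ?thesis using h h_def by simp
qed

lemma card_filter_lessThan_eq_iff: "card {i'\<in>{..<i}. P i'} = i \<longleftrightarrow> (\<forall>i'<i. P i')"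
proof
  assume "card {i'\<in>{..<i}. P i'} = i"
  hence "{i'\<in>{..<i}. P i'} = {..<i}" by (intro card_subset_eq) auto
  thus "\<forall>i'<i. P i'" by auto
next
  assume "\<forall>i'<i. P i'"
  hence "{i'\<in>{..<i}. P i'} = {..<i}" by auto
  thus "card {i'\<in>{..<i}. P i'} = i" by simp
qed

lemma card_filter_lessThan_le: "card {i'\<in>{..<i}. P i'} \<le> i"
  using card_mono[of "{..<i}" "{i'\<in>{..<i}. P i'}"] by auto

section \<open>Integrality gaps\<close>

lemma of_int_eq_0_if_square_less_half: "(real_of_int d)\<^sup>2 < 1/2 \<Longrightarrow> d = 0"
proof (rule ccontr)
  assume "(real_of_int d)\<^sup>2 < 1/2" "d \<noteq> 0"
  moreover from \<open>d \<noteq> 0\<close> have "1 \<le> \<bar>real_of_int d\<bar>" by linarith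
  hence "1 \<le> (real_of_int d)\<^sup>2" by (metis abs_le_square_iff abs_one one_power2)
  ultimately show False by simp
qed

lemma of_nat_add_half_less_iff: "real b + 1/2 < real (a::nat) \<longleftrightarrow> b < a"
proof (cases "b < a")
  case True
  hence "real (b + 1) \<le> real a" by (intro of_nat_mono) simp
  thus ?thesis using True by simp
qed simp

lemma of_nat_less_add_half_iff: "real a < real b + 1/2 \<longleftrightarrow> a \<le> (b::nat)"
proof (cases "a \<le> b")
  case False
  hence "real (b + 1) \<le> real a" by (intro of_nat_mono) simp
  thus ?thesis using False by simp
qed simp

lemma of_nat_mult_add_gt_iff:
  fixes R a r c :: nat
  assumes "r < R"
  shows "real (R * c) - 1/2 < real (R * a + r) \<longleftrightarrow> c \<le> a"
proof
  assume "c \<le> a"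
  hence "R * c \<le> R * a + r" by (simp add: add_increasing2)
  hence "real (R * c) \<le> real (R * a + r)" by (rule of_nat_mono)
  thus "real (R * c) - 1/2 < real (R * a + r)" by linarith
next
  assume "real (R * c) - 1/2 < real (R * a + r)"
  hence "\<not> R * a + r < R * c" using of_nat_add_half_less_iff[of "R * a + r" "R * c"] by linarith
  hence "\<not> R * (a + 1) \<le> R * c" using assms by simp
  thus "c \<le> a" by (metis Suc_eq_plus1 mult_le_mono2 not_less_eq_eq)
qed

lemma greedy_division_bit:
  fixes D n r :: nat
  assumes "r < D"
  shows "real D * 2 ^ b - 1/2 < real (D * n + r) - real D * (2 ^ (b + 1) * real (n div 2 ^ (b + 1)))
    \<longleftrightarrow> bit n b"
proof -
  have "n = 2 ^ (b + 1) * (n div 2 ^ (b + 1)) + n mod 2 ^ (b + 1)" by simp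
  hence "real n = 2 ^ (b + 1) * real (n div 2 ^ (b + 1)) + real (n mod 2 ^ (b + 1))"
    by (metis of_nat_add of_nat_mult of_nat_numeral of_nat_power)
  hence "real (D * n + r) - real D * (2 ^ (b + 1) * real (n div 2 ^ (b + 1)))
      = real (D * (n mod 2 ^ (b + 1)) + r)"
    by (simp add: algebra_simps)
  moreover have "real D * 2 ^ b = real (D * 2 ^ b)" by simp
  ultimately show ?thesis by (simp only: of_nat_mult_add_gt_iff[OF assms] two_pow_le_mod_iff_bit)
qed

section \<open>Weight patterns\<close>

definition block_weights :: "nat \<Rightarrow> nat \<Rightarrow> (nat \<Rightarrow> real) \<Rightarrow> nat + nat \<Rightarrow> real" where
  "block_weights lo len g a =
     (case a of Inr k \<Rightarrow> if lo \<le> k \<and> k < lo + len then g (k - lo) else 0 | Inl _ \<Rightarrow> 0)"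

definition neuron_weight :: "nat \<Rightarrow> real \<Rightarrow> nat + nat \<Rightarrow> real" where
  "neuron_weight p c a = (case a of Inr k \<Rightarrow> if k = p then c else 0 | Inl _ \<Rightarrow> 0)"

definition input_weight :: "nat \<Rightarrow> real \<Rightarrow> nat + nat \<Rightarrow> real" where
  "input_weight j c a = (case a of Inl k \<Rightarrow> if k = j then c else 0 | Inr _ \<Rightarrow> 0)"

definition block_quad_weights ::
    "nat \<Rightarrow> nat \<Rightarrow> (nat \<Rightarrow> nat \<Rightarrow> real) \<Rightarrow> nat + nat \<Rightarrow> nat + nat \<Rightarrow> real" where
  "block_quad_weights lo len g a b = block_weights lo len (\<lambda>i. block_weights lo len (g i) b) a"

lemma activation_Inr [simp]: "activation u s (Inr k) = of_bool (s k)"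
  by (simp add: activation_def)

lemma activation_Inl [simp]: "activation u s (Inl j) = real (u j)"
  by (simp add: activation_def)

lemma sum_units: "(\<Sum>a\<in>units N net. f a) = (\<Sum>j<N. f (Inl j)) + (\<Sum>k<nn net. f (Inr k))"
proof -
  have "(\<Sum>a\<in>units N net. f a) = sum f (Inl ` {..<N}) + sum f (Inr ` {..<nn net})"
    unfolding units_def by (rule sum.union_disjoint) auto
  thus ?thesis by (simp add: sum.reindex)
qed

lemma sum_block_weights:
  assumes "lo + len \<le> nn net"
  shows "(\<Sum>a\<in>units N net. block_weights lo len g a * z a) = (\<Sum>i<len. g i * z (Inr (lo + i)))"
proof -
  have "(\<Sum>k<nn net. block_weights lo len g (Inr k) * z (Inr k))
      = (\<Sum>k\<in>{lo..<lo + len}. g (k - lo) * z (Inr k))"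
    using assms by (intro sum.mono_neutral_cong_right) (auto simp: block_weights_def)
  thus ?thesis by (simp add: sum_units block_weights_def sum_shift_lessThan)
qed

lemma sum_neuron_weight:
  assumes "p < nn net"
  shows "(\<Sum>a\<in>units N net. neuron_weight p c a * z a) = c * z (Inr p)"
proof -
  have "(\<Sum>k<nn net. neuron_weight p c (Inr k) * z (Inr k)) = (\<Sum>k\<in>{p}. c * z (Inr k))"
    using assms by (intro sum.mono_neutral_cong_right) (auto simp: neuron_weight_def)
  thus ?thesis by (simp add: sum_units neuron_weight_def)
qed

lemma sum_input_weight:
  assumes "j < N"
  shows "(\<Sum>a\<in>units N net. input_weight j c a * z a) = c * z (Inl j)"
proof -
  have "(\<Sum>k<N. input_weight j c (Inl k) * z (Inl k)) = (\<Sum>k\<in>{j}. c * z (Inl k))"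
    using assms by (intro sum.mono_neutral_cong_right) (auto simp: input_weight_def)
  thus ?thesis by (simp add: sum_units input_weight_def)
qed

lemma sum_block_quad_weights:
  assumes "lo + len \<le> nn net"
  shows "(\<Sum>a\<in>units N net. \<Sum>b\<in>units N net. block_quad_weights lo len g a b * z a * z b)
       = (\<Sum>i<len. \<Sum>i'<len. g i i' * z (Inr (lo + i)) * z (Inr (lo + i')))"
proof -
  have "(\<Sum>b\<in>units N net. block_quad_weights lo len g a b * z a * z b)
      = block_weights lo len (\<lambda>i. \<Sum>b\<in>units N net. block_weights lo len (g i) b * z b) a * z a" for a
    by (cases a) (auto simp: block_quad_weights_def block_weights_def sum_distrib_left
        sum_distrib_right mult_ac)
  hence "(\<Sum>a\<in>units N net. \<Sum>b\<in>units N net. block_quad_weights lo len g a b * z a * z b)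
      = (\<Sum>i<len. (\<Sum>b\<in>units N net. block_weights lo len (g i) b * z b) * z (Inr (lo + i)))"
    by (simp add: sum_block_weights[OF assms])
  also have "\<dots> = (\<Sum>i<len. (\<Sum>i'<len. g i i' * z (Inr (lo + i'))) * z (Inr (lo + i)))"
    by (simp add: sum_block_weights[OF assms])
  finally show ?thesis by (simp add: sum_distrib_left mult_ac)
qed

section \<open>The decoder network\<close>

text \<open>\<open>Counter j i\<close> is digit \<open>i\<close> of a counter holding \<open>t mod \<lambda>\<^sub>j\<close> at time \<open>t\<close>: in
  binary for quadratic networks, in unary (\<open>Counter j i\<close> fires iff \<open>t mod \<lambda>\<^sub>j = i \<noteq> 0\<close>) for
  linear ones; \<open>Wrap j\<close> fires when the binary counter shows \<open>\<lambda>\<^sub>j - 1\<close>, to reset it. \<open>AboveInput j\<close> and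
  \<open>BelowInput j\<close> compare counter \<open>j\<close> with input \<open>j\<close>. \<open>Started\<close> fires from time 1 on, \<open>Pulse\<close> exactly
  once, and \<open>Found\<close> from the step after the pulse on. \<open>Snapshot j i\<close> latches \<open>Counter j i\<close> at the
  pulse, and \<open>QuotBit b\<close>, \<open>RemBit b\<close> hold the bits of quotient and remainder of the division of
  the recombined residues by \<open>R\<^sub>l\<close>.\<close>

datatype role = Counter nat nat | Snapshot nat nat | Wrap nat | AboveInput nat | BelowInput nat
  | Started | Pulse | Found | QuotBit nat | RemBit nat | Unused

text \<open>Parameters: \<open>W\<close> digits per counter, \<open>qbits\<close> and \<open>xbits\<close> bits for quotient and
  remainder, a basis \<open>E\<close> of the Chinese remainder theorem (\<open>E i \<equiv> 1\<close> modulo \<open>\<lambda>\<^sub>i\<close> and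
  \<open>\<equiv> 0\<close> modulo the other \<open>\<lambda>\<^sub>i\<^sub>'\<close>), and the number \<open>\<tau>\<close> of corrupted coordinates tolerated.\<close>

locale grid_decoder =
  fixes quad :: bool and N :: nat and lam :: "nat \<Rightarrow> nat" and K :: nat
    and W qbits xbits :: nat and E :: "nat \<Rightarrow> nat" and \<tau> :: nat
begin

definition R :: nat where
  "R = (\<Prod>i<K. lam i)"

definition counter_idx :: "nat \<Rightarrow> nat \<Rightarrow> nat" where
  "counter_idx j i = j * W + i"
definition snapshot_idx :: "nat \<Rightarrow> nat \<Rightarrow> nat" where
  "snapshot_idx j i = N * W + j * W + i"
definition wrap_idx :: "nat \<Rightarrow> nat" where
  "wrap_idx j = 2 * N * W + j"
definition above_idx :: "nat \<Rightarrow> nat" where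
  "above_idx j = 2 * N * W + N + j"
definition below_idx :: "nat \<Rightarrow> nat" where
  "below_idx j = 2 * N * W + 2 * N + j"
definition started_idx :: nat where
  "started_idx = 2 * N * W + 3 * N"
definition pulse_idx :: nat where
  "pulse_idx = started_idx + 1"
definition found_idx :: nat where
  "found_idx = started_idx + 2"
definition quot_idx :: "nat \<Rightarrow> nat" where
  "quot_idx b = started_idx + 3 + b"
definition rem_idx :: "nat \<Rightarrow> nat" where
  "rem_idx b = started_idx + 3 + qbits + b"
definition num_neurons :: nat where
  "num_neurons = started_idx + 3 + qbits + xbits"

definition role_of :: "nat \<Rightarrow> role" where
  "role_of k =
    (if k < N * W then Counter (k div W) (k mod W)
     else if k < 2 * N * W then Snapshot ((k - N * W) div W) ((k - N * W) mod W)
     else if k < 2 * N * W + N then Wrap (k - 2 * N * W)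
     else if k < 2 * N * W + 2 * N then AboveInput (k - (2 * N * W + N))
     else if k < started_idx then BelowInput (k - (2 * N * W + 2 * N))
     else if k = started_idx then Started else if k = pulse_idx then Pulse
     else if k = found_idx then Found
     else if k < started_idx + 3 + qbits then QuotBit (k - (started_idx + 3))
     else if k < num_neurons then RemBit (k - (started_idx + 3 + qbits)) else Unused)"

definition digit_value :: "nat \<Rightarrow> real" where
  "digit_value i = (if quad then 2 ^ i else real i)"

text \<open>Exceeds every mismatch count, so that \<open>Started\<close> and \<open>Found\<close> dominate the fields of
  \<open>Pulse\<close> and \<open>Found\<close>.\<close>
definition latch_weight :: real where
  "latch_weight = 2 * real N + 2"

definition crt_weights :: "nat + nat \<Rightarrow> real" where
  "crt_weights =
     block_weights (snapshot_idx 0 0) (K * W) (\<lambda>t. real (E (t div W)) * digit_value (t mod W))"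

text \<open>The binary counter increments by flipping digit \<open>i\<close> iff all lower digits are set: with
  \<open>b\<close> the digit and \<open>A\<close> the number of set lower digits, the field of \<open>Counter j i\<close> is
  \<open>(2b - 1)(i - 1/2 - A) + (i - 1/2)\<close>, minus a large weight while \<open>Wrap j\<close> fires. The field of
  \<open>Wrap j\<close> is \<open>- v\<^sup>2 + 2(\<lambda>\<^sub>j - 2)v\<close> for the counter value \<open>v\<close>, which exceeds its threshold iff
  \<open>v = \<lambda>\<^sub>j - 2\<close>, so \<open>Wrap j\<close> fires together with the counter showing \<open>\<lambda>\<^sub>j - 1\<close>. The unary
  counter moves its single set digit up by one, \<open>Counter j 1\<close> firing when no digit is set.
  \<open>QuotBit b\<close> and \<open>RemBit b\<close> do greedy long division: bit \<open>b\<close> is set iff what remains after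
  subtracting the higher bits is at least \<open>2\<^sup>b\<close> (times \<open>R\<^sub>l\<close> for the quotient). The snapshot
  holds the residues of \<open>x + 2\<close>, so their recombination \<open>residue_sum\<close> is shifted to
  \<open>residue_sum + R\<^sub>l - 2 \<ge> 0\<close>, which is congruent to \<open>x\<close>; this shift appears in the thresholds.\<close>

fun lin_weight :: "role \<Rightarrow> nat + nat \<Rightarrow> real" where
  "lin_weight (Counter j i) =
     (if quad then (\<lambda>a. block_weights (counter_idx j 0) W
                           (\<lambda>i'. if i' = i then 2 * real i - 1 else if i' < i then 1 else 0) a
                         + neuron_weight (wrap_idx j) (- (2 * real W + 2)) a)
      else if i = 1 then block_weights (counter_idx j 0) W (\<lambda>i'. if 1 \<le> i' \<and> i' < lam j then -1 else 0)
      else if 2 \<le> i \<and> i < lam j then neuron_weight (counter_idx j (i - 1)) 1 else (\<lambda>_. 0))"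
| "lin_weight (Snapshot j i) =
     (\<lambda>a. neuron_weight (snapshot_idx j i) 2 a + neuron_weight (counter_idx j i) 1 a
          + neuron_weight pulse_idx 1 a)"
| "lin_weight (Wrap j) =
     (if quad then block_weights (counter_idx j 0) W (\<lambda>i. 2 * (real (lam j) - 2) * 2 ^ i)
      else (\<lambda>_. 0))"
| "lin_weight (AboveInput j) = (\<lambda>a. block_weights (counter_idx j 0) W digit_value a + input_weight j (-1) a)"
| "lin_weight (BelowInput j) =
     (\<lambda>a. block_weights (counter_idx j 0) W (\<lambda>i. - digit_value i) a + input_weight j 1 a)"
| "lin_weight Started = (\<lambda>_. 0)"
| "lin_weight Pulse =
     (\<lambda>a. block_weights (above_idx 0) (2 * N) (\<lambda>_. -1) a + neuron_weight found_idx (- latch_weight) a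
          + neuron_weight started_idx latch_weight a)"
| "lin_weight Found =
     (\<lambda>a. block_weights (above_idx 0) (2 * N) (\<lambda>_. -1) a + neuron_weight found_idx (3 * latch_weight) a
          + neuron_weight started_idx latch_weight a)"
| "lin_weight (QuotBit b) =
     (\<lambda>a. crt_weights a + block_weights (quot_idx 0) qbits (\<lambda>b'. if b < b' then - (real R * 2 ^ b') else 0) a)"
| "lin_weight (RemBit b) =
     (\<lambda>a. crt_weights a + block_weights (quot_idx 0) qbits (\<lambda>b'. - (real R * 2 ^ b')) a
          + block_weights (rem_idx 0) xbits (\<lambda>b'. if b < b' then - (2 ^ b') else 0) a)"
| "lin_weight Unused = (\<lambda>_. 0)"

fun quad_weight :: "role \<Rightarrow> nat + nat \<Rightarrow> nat + nat \<Rightarrow> real" where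
  "quad_weight (Counter j i) =
     (if quad then block_quad_weights (counter_idx j 0) W (\<lambda>i1 i2. if i1 = i \<and> i2 < i then -2 else 0)
      else (\<lambda>_ _. 0))"
| "quad_weight (Wrap j) =
     (if quad then block_quad_weights (counter_idx j 0) W (\<lambda>i1 i2. - (2 ^ i1 * 2 ^ i2)) else (\<lambda>_ _. 0))"
| "quad_weight _ = (\<lambda>_ _. 0)"

fun threshold :: "role \<Rightarrow> real" where
  "threshold (Counter j i) = (if quad then real i - 1/2 else if i = 1 then - 1/2 else 1/2)"
| "threshold (Snapshot j i) = 3/2"
| "threshold (Wrap j) = (if quad then (real (lam j) - 2)\<^sup>2 - 1/2 else 1/2)"
| "threshold (AboveInput j) = 1/2"
| "threshold (BelowInput j) = 1/2"
| "threshold Started = -1"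
| "threshold Pulse = latch_weight - real \<tau> - 1/2"
| "threshold Found = latch_weight - real \<tau> - 1/2"
| "threshold (QuotBit b) = real R * 2 ^ b - 1/2 - (real R - 2)"
| "threshold (RemBit b) = 2 ^ b - 1/2 - (real R - 2)"
| "threshold Unused = 1/2"

text \<open>For the decoded location \<open>x < R\<^sub>l\<close> the pulse comes at time \<open>x + 2\<close>; the quotient and then
  the remainder bits settle one per step after it.\<close>

definition net :: bnn where
  "net = \<lparr> nn = num_neurons, W2 = (\<lambda>k. quad_weight (role_of k)), W1 = (\<lambda>k. lin_weight (role_of k)),
          thr = (\<lambda>k. threshold (role_of k)), steps = R + qbits + xbits + 3,
          outs = map rem_idx [0..<xbits] \<rparr>"

lemma nn_net [simp]: "nn net = num_neurons"
  by (simp add: net_def)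

lemma linear_net: "\<not> quad \<Longrightarrow> linear_bnn net"
proof -
  assume "\<not> quad"
  have "quad_weight r a b = 0" for r a b by (cases r) (simp_all add: if_not_P[OF \<open>\<not> quad\<close>])
  thus ?thesis by (simp add: linear_bnn_def net_def)
qed

definition state :: "(nat \<Rightarrow> nat) \<Rightarrow> nat \<Rightarrow> nat \<Rightarrow> bool" where
  "state u t = (bnn_step N net u ^^ t) (\<lambda>_. False)"

lemma state_0 [simp]: "state u 0 k = False"
  by (simp add: state_def)

lemma state_Suc:
  "k < num_neurons \<Longrightarrow> state u (Suc t) k \<longleftrightarrow> threshold (role_of k) < field N net k (activation u (state u t))"
  by (simp add: state_def bnn_step_def net_def)

lemma output_net:
  "bnn_output N net u = (\<Sum>b<xbits. if state u (R + qbits + xbits + 3) (rem_idx b) then 2 ^ b else 0)"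
  by (simp add: bnn_output_def bnn_run_def state_def net_def)

definition counter_value :: "(nat \<Rightarrow> bool) \<Rightarrow> nat \<Rightarrow> real" where
  "counter_value s j = (\<Sum>i<W. digit_value i * of_bool (s (counter_idx j i)))"

definition snapshot_value :: "(nat \<Rightarrow> bool) \<Rightarrow> nat \<Rightarrow> real" where
  "snapshot_value s j = (\<Sum>i<W. digit_value i * of_bool (s (snapshot_idx j i)))"

definition mismatch_count :: "(nat \<Rightarrow> bool) \<Rightarrow> real" where
  "mismatch_count s = (\<Sum>i<2 * N. of_bool (s (above_idx 0 + i)))"

definition crt_sum :: "(nat \<Rightarrow> bool) \<Rightarrow> real" where
  "crt_sum s = (\<Sum>t<K * W. real (E (t div W)) * digit_value (t mod W) * of_bool (s (snapshot_idx 0 0 + t)))"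

end

locale grid_decoder_wf = grid_decoder +
  assumes W_pos: "0 < W" and K_le_N: "K \<le> N" and tau_le_N: "\<tau> \<le> N"
    and lam_ge_2: "\<And>j. j < N \<Longrightarrow> 2 \<le> lam j"
    and lam_le_binary: "\<And>j. quad \<Longrightarrow> j < N \<Longrightarrow> lam j \<le> 2 ^ W"
    and lam_le_unary: "\<And>j. \<not> quad \<Longrightarrow> j < N \<Longrightarrow> lam j \<le> W"
begin

lemma role_of_counter [simp]: "j < N \<Longrightarrow> i < W \<Longrightarrow> role_of (counter_idx j i) = Counter j i"
  using block_index_less[of j N i W] by (simp add: role_of_def counter_idx_def)

lemma role_of_snapshot [simp]: "j < N \<Longrightarrow> i < W \<Longrightarrow> role_of (snapshot_idx j i) = Snapshot j i"
  using block_index_less[of j N i W] by (simp add: role_of_def snapshot_idx_def)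

lemma role_of_simps [simp]:
  "j < N \<Longrightarrow> role_of (wrap_idx j) = Wrap j"
  "j < N \<Longrightarrow> role_of (above_idx j) = AboveInput j"
  "j < N \<Longrightarrow> role_of (below_idx j) = BelowInput j"
  "role_of started_idx = Started"
  "role_of pulse_idx = Pulse"
  "role_of found_idx = Found"
  "b < qbits \<Longrightarrow> role_of (quot_idx b) = QuotBit b"
  "b < xbits \<Longrightarrow> role_of (rem_idx b) = RemBit b"
  by (simp_all add: role_of_def wrap_idx_def above_idx_def below_idx_def started_idx_def
      pulse_idx_def found_idx_def quot_idx_def rem_idx_def num_neurons_def)

lemma counter_idx_less: "j < N \<Longrightarrow> i < W \<Longrightarrow> counter_idx j i < num_neurons"
  using block_index_less[of j N i W] by (simp add: counter_idx_def num_neurons_def started_idx_def)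

lemma snapshot_idx_less: "j < N \<Longrightarrow> i < W \<Longrightarrow> snapshot_idx j i < num_neurons"
  using block_index_less[of j N i W] by (simp add: snapshot_idx_def num_neurons_def started_idx_def)

lemma idx_less:
  "j < N \<Longrightarrow> wrap_idx j < num_neurons"
  "j < N \<Longrightarrow> above_idx j < num_neurons"
  "j < N \<Longrightarrow> below_idx j < num_neurons"
  "started_idx < num_neurons" "pulse_idx < num_neurons" "found_idx < num_neurons"
  "b < qbits \<Longrightarrow> quot_idx b < num_neurons"
  "b < xbits \<Longrightarrow> rem_idx b < num_neurons"
  by (simp_all add: wrap_idx_def above_idx_def below_idx_def started_idx_def pulse_idx_def
      found_idx_def quot_idx_def rem_idx_def num_neurons_def)

lemma block_le_num_neurons:
  "j < N \<Longrightarrow> counter_idx j 0 + W \<le> num_neurons"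
  "above_idx 0 + 2 * N \<le> num_neurons"
  "snapshot_idx 0 0 + K * W \<le> num_neurons"
  "quot_idx 0 + qbits \<le> num_neurons"
  "rem_idx 0 + xbits \<le> num_neurons"
proof -
  show "counter_idx j 0 + W \<le> num_neurons" if "j < N"
  proof -
    have "j * W + W \<le> N * W" using that by (metis add.commute mult_Suc mult_le_mono1 Suc_le_eq)
    thus ?thesis by (simp add: counter_idx_def num_neurons_def started_idx_def)
  qed
  have "K * W \<le> N * W" using K_le_N by (rule mult_le_mono1)
  thus "snapshot_idx 0 0 + K * W \<le> num_neurons"
    unfolding snapshot_idx_def num_neurons_def started_idx_def by linarith
qed (simp_all add: above_idx_def quot_idx_def rem_idx_def num_neurons_def started_idx_def)

lemma idx_add [simp]:
  "counter_idx j 0 + i = counter_idx j i" "snapshot_idx j 0 + i = snapshot_idx j i"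
  "quot_idx 0 + b = quot_idx b" "rem_idx 0 + b = rem_idx b"
  by (simp_all add: counter_idx_def snapshot_idx_def quot_idx_def rem_idx_def)

lemma field_net: "field N net k z =
    (\<Sum>a\<in>units N net. \<Sum>b\<in>units N net. quad_weight (role_of k) a b * z a * z b)
    + (\<Sum>a\<in>units N net. lin_weight (role_of k) a * z a)"
  by (simp add: field_def net_def)

lemma field_above: "j < N \<Longrightarrow> field N net (above_idx j) (activation u s) = counter_value s j - real (u j)"
  using block_le_num_neurons(1)[of j]
  by (simp add: field_net sum.distrib distrib_right sum_block_weights sum_input_weight counter_value_def)

lemma field_below: "j < N \<Longrightarrow> field N net (below_idx j) (activation u s) = real (u j) - counter_value s j"
  using block_le_num_neurons(1)[of j]
  by (simp add: field_net sum.distrib distrib_right sum_block_weights sum_input_weight counter_value_def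
      sum_negf)

lemma field_started: "field N net started_idx (activation u s) = 0"
  by (simp add: field_net)

lemma field_pulse: "field N net pulse_idx (activation u s)
    = - mismatch_count s - latch_weight * of_bool (s found_idx) + latch_weight * of_bool (s started_idx)"
  using block_le_num_neurons(2) idx_less(4,6)
  by (simp add: field_net sum.distrib distrib_right sum_block_weights sum_neuron_weight mismatch_count_def sum_negf)

lemma field_found: "field N net found_idx (activation u s)
    = - mismatch_count s + 3 * latch_weight * of_bool (s found_idx) + latch_weight * of_bool (s started_idx)"
  using block_le_num_neurons(2) idx_less(4,6)
  by (simp add: field_net sum.distrib distrib_right sum_block_weights sum_neuron_weight mismatch_count_def sum_negf)

lemma field_snapshot: "j < N \<Longrightarrow> i < W \<Longrightarrow> field N net (snapshot_idx j i) (activation u s)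
    = 2 * of_bool (s (snapshot_idx j i)) + of_bool (s (counter_idx j i)) + of_bool (s pulse_idx)"
  using snapshot_idx_less[of j i] counter_idx_less[of j i] idx_less(5)
  by (simp add: field_net sum.distrib distrib_right sum_neuron_weight)

lemma field_quot_bit: "b < qbits \<Longrightarrow> field N net (quot_idx b) (activation u s)
    = crt_sum s + (\<Sum>b'<qbits. (if b < b' then - (real R * 2 ^ b') else 0) * of_bool (s (quot_idx b')))"
  using block_le_num_neurons(3,4)
  by (simp add: field_net sum.distrib distrib_right sum_block_weights crt_weights_def crt_sum_def)

lemma field_rem_bit: "b < xbits \<Longrightarrow> field N net (rem_idx b) (activation u s)
    = crt_sum s + (\<Sum>b'<qbits. - (real R * 2 ^ b') * of_bool (s (quot_idx b')))
       + (\<Sum>b'<xbits. (if b < b' then - (2 ^ b') else 0) * of_bool (s (rem_idx b')))"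
  using block_le_num_neurons(3,4,5)
  by (simp add: field_net sum.distrib distrib_right sum_block_weights crt_weights_def crt_sum_def)

subsection \<open>The counters\<close>

lemma field_counter_binary:
  assumes binary: quad and j: "j < N" and i: "i < W"
  shows "field N net (counter_idx j i) (activation u s)
     = (2 * of_bool (s (counter_idx j i)) - 1) * (real i - 1/2 - (\<Sum>i'<i. of_bool (s (counter_idx j i'))))
       + (real i - 1/2) - (2 * real W + 2) * of_bool (s (wrap_idx j))"
proof -
  define b :: "nat \<Rightarrow> real" where "b i' = of_bool (s (counter_idx j i'))" for i'
  have "field N net (counter_idx j i) (activation u s)
     = (\<Sum>i1<W. \<Sum>i2<W. (if i1 = i \<and> i2 < i then -2 else 0) * b i1 * b i2)
       + ((\<Sum>i'<W. (if i' = i then 2 * real i - 1 else if i' < i then 1 else 0) * b i')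
       - (2 * real W + 2) * of_bool (s (wrap_idx j)))"
    using block_le_num_neurons(1)[of j] idx_less(1)[of j] j i
    by (simp add: field_net if_P[OF binary] sum_block_quad_weights sum.distrib distrib_right sum_block_weights
        sum_neuron_weight b_def del: sum_mult_of_bool_eq)
  also have "\<dots> = (2 * b i - 1) * (real i - 1/2 - (\<Sum>i'<i. b i'))
       + (real i - 1/2) - (2 * real W + 2) * of_bool (s (wrap_idx j))"
    unfolding sum_lower_weights[OF i] sum_lower_pairs[OF i] by (simp add: algebra_simps)
  finally show ?thesis by (simp add: b_def)
qed

lemma field_wrap_binary:
  assumes binary: quad and j: "j < N"
  shows "field N net (wrap_idx j) (activation u s)
     = - (counter_value s j)\<^sup>2 + 2 * (real (lam j) - 2) * counter_value s j"
proof -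
  define b :: "nat \<Rightarrow> real" where "b i' = of_bool (s (counter_idx j i'))" for i'
  have "field N net (wrap_idx j) (activation u s)
     = (\<Sum>i1<W. \<Sum>i2<W. - (2 ^ i1 * 2 ^ i2) * b i1 * b i2)
       + (\<Sum>i<W. 2 * (real (lam j) - 2) * 2 ^ i * b i)"
    using block_le_num_neurons(1)[of j] j
    by (simp add: field_net if_P[OF binary] sum_block_quad_weights sum_block_weights b_def del: sum_mult_of_bool_eq)
  also have "\<dots> = - (\<Sum>i<W. 2 ^ i * b i)\<^sup>2 + 2 * (real (lam j) - 2) * (\<Sum>i<W. 2 ^ i * b i)"
    by (simp add: power2_eq_square sum_product sum_distrib_left sum_negf mult_ac)
  finally show ?thesis by (simp add: counter_value_def digit_value_def if_P[OF binary] b_def)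
qed

lemma state_wrap_binary:
  assumes binary: quad and j: "j < N" and n: "n < lam j"
    and digits: "counter_value (state u t) j = real n"
  shows "state u (Suc t) (wrap_idx j) \<longleftrightarrow> n = lam j - 2"
proof -
  have "state u (Suc t) (wrap_idx j)
      \<longleftrightarrow> (real (lam j) - 2)\<^sup>2 - 1/2 < - (real n)\<^sup>2 + 2 * (real (lam j) - 2) * real n"
    using idx_less(1)[OF j] by (simp add: state_Suc field_wrap_binary[OF binary j] digits j if_P[OF binary])
  also have "\<dots> \<longleftrightarrow> (real n - (real (lam j) - 2))\<^sup>2 < 1/2"
  proof -
    have "(real n - (real (lam j) - 2))\<^sup>2
        = (real n)\<^sup>2 - 2 * (real (lam j) - 2) * real n + (real (lam j) - 2)\<^sup>2"
      by (simp add: power2_eq_square algebra_simps)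
    thus ?thesis by linarith
  qed
  also have "\<dots> \<longleftrightarrow> real n = real (lam j) - 2"
  proof
    assume "(real n - (real (lam j) - 2))\<^sup>2 < 1/2"
    hence "int n - (int (lam j) - 2) = 0" by (intro of_int_eq_0_if_square_less_half) simp
    thus "real n = real (lam j) - 2" by simp
  qed simp
  also have "\<dots> \<longleftrightarrow> n = lam j - 2" using lam_ge_2[OF j] by auto
  finally show ?thesis .
qed

lemma state_counter_binary_Suc:
  assumes binary: quad and j: "j < N" and i: "i < W" and n: "n < lam j"
    and digits: "\<And>i. i < W \<Longrightarrow> state u t (counter_idx j i) = bit n i"
    and wrap: "state u t (wrap_idx j) \<longleftrightarrow> n = lam j - 1"
  shows "state u (Suc t) (counter_idx j i) = bit (if n = lam j - 1 then 0 else n + 1) i"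
proof -
  define A where "A = card {i'\<in>{..<i}. bit n i'}"
  have A_le: "A \<le> i" unfolding A_def by (rule card_filter_lessThan_le)
  have "(\<Sum>i'<i. of_bool (state u t (counter_idx j i')) :: real) = real A"
    using i digits by (simp add: A_def Int_def)
  hence "state u (Suc t) (counter_idx j i) \<longleftrightarrow> real i - 1/2 <
      (2 * of_bool (bit n i) - 1) * (real i - 1/2 - real A) + (real i - 1/2)
      - (2 * real W + 2) * of_bool (n = lam j - 1)"
    using counter_idx_less[OF j i] j i
    by (simp add: state_Suc field_counter_binary[OF binary j i] digits[OF i] wrap if_P[OF binary])
  also have "\<dots> \<longleftrightarrow> bit (if n = lam j - 1 then 0 else n + 1) i"
  proof (cases "n = lam j - 1")
    case True
    have "(2 * of_bool (bit n i) - 1) * (real i - 1/2 - real A) \<le> 2 * real W + 2"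
      using A_le i by (cases "bit n i") auto
    thus ?thesis using True by simp
  next
    case False
    have "bit (n + 1) i \<longleftrightarrow> (bit n i \<noteq> (A = i))"
      unfolding bit_Suc_iff A_def card_filter_lessThan_eq_iff low_bits_set_iff ..
    moreover have "real i - 1/2 < (2 * of_bool (bit n i) - 1) * (real i - 1/2 - real A) + (real i - 1/2)
        \<longleftrightarrow> (bit n i \<noteq> (A = i))"
      using A_le by (cases "bit n i") auto
    ultimately show ?thesis using False by simp
  qed
  finally show ?thesis .
qed

lemma state_counter_binary:
  assumes binary: quad and j: "j < N"
  shows "(\<forall>i<W. state u t (counter_idx j i) = bit (t mod lam j) i)
    \<and> (state u t (wrap_idx j) \<longleftrightarrow> t mod lam j = lam j - 1)"
proof (induction t)
  case 0
  thus ?case using lam_ge_2[OF j] by simp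
next
  case (Suc t)
  define n where "n = t mod lam j"
  have n: "n < lam j" using lam_ge_2[OF j] by (simp add: n_def)
  have digits: "\<And>i. i < W \<Longrightarrow> state u t (counter_idx j i) = bit n i"
    using Suc.IH by (simp add: n_def)
  have "counter_value (state u t) j = (\<Sum>i<W. 2 ^ i * of_bool (bit n i))"
    unfolding counter_value_def digit_value_def if_P[OF binary] by (intro sum.cong) (simp_all add: digits)
  also have "\<dots> = real n" using n lam_le_binary[OF binary j] by (intro sum_bits) simp
  finally have "state u (Suc t) (wrap_idx j) \<longleftrightarrow> n = lam j - 2"
    by (rule state_wrap_binary[OF binary j n])
  moreover have "\<forall>i<W. state u (Suc t) (counter_idx j i) = bit (if n = lam j - 1 then 0 else n + 1) i"
    using Suc.IH state_counter_binary_Suc[OF binary j _ n digits] by (simp add: n_def)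
  ultimately show ?case
    using Suc_mod_eq[OF lam_ge_2[OF j], of t] n lam_ge_2[OF j] by (auto simp: n_def)
qed

lemma state_counter_unary:
  assumes unary: "\<not> quad" and j: "j < N"
  shows "\<forall>i<W. state u t (counter_idx j i) \<longleftrightarrow> i \<noteq> 0 \<and> t mod lam j = i"
proof (induction t)
  case (Suc t)
  define n where "n = t mod lam j"
  have l2: "2 \<le> lam j" and lW: "lam j \<le> W" using lam_ge_2[OF j] lam_le_unary[OF unary j] .
  have n: "n < lam j" using l2 by (simp add: n_def)
  have IH: "\<And>i. i < W \<Longrightarrow> state u t (counter_idx j i) \<longleftrightarrow> i \<noteq> 0 \<and> n = i"
    using Suc.IH by (simp add: n_def)
  have next_n: "Suc t mod lam j = (if n = lam j - 1 then 0 else n + 1)"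
    using Suc_mod_eq[OF l2] by (simp add: n_def)
  show ?case
  proof (intro allI impI)
    fix i assume i: "i < W"
    have field: "field N net (counter_idx j i) (activation u (state u t)) =
      (if i = 1 then (\<Sum>i'<W. (if 1 \<le> i' \<and> i' < lam j then -1 else 0) * of_bool (state u t (counter_idx j i')))
       else if 2 \<le> i \<and> i < lam j then of_bool (state u t (counter_idx j (i - 1))) else 0)"
      using block_le_num_neurons(1)[OF j] counter_idx_less[OF j, of "i - 1"] j i
      by (simp add: field_net if_not_P[OF unary] sum_block_weights sum_neuron_weight
          del: sum_mult_of_bool_eq)
    show "state u (Suc t) (counter_idx j i) \<longleftrightarrow> i \<noteq> 0 \<and> Suc t mod lam j = i"
    proof (cases "i = 1")
      case True
      have "(\<Sum>i'<W. (if 1 \<le> i' \<and> i' < lam j then -1 else 0) * of_bool (state u t (counter_idx j i')))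
          = (\<Sum>i'<W. if i' = n then (if 1 \<le> i' then -1 else 0) else (0::real))"
        using n by (intro sum.cong) (auto simp: IH)
      also have "\<dots> = (if 1 \<le> n then -1 else 0)" using n lW by (subst sum.delta) auto
      finally show ?thesis
        using True field counter_idx_less[OF j i] j i next_n l2
        by (cases "n = lam j - 1") (auto simp: state_Suc if_not_P[OF unary])
    next
      case False
      thus ?thesis
        using field counter_idx_less[OF j i] j i IH[of "i - 1"] next_n l2 n
        by (cases "n = lam j - 1") (auto simp: state_Suc if_not_P[OF unary])
    qed
  qed
qed auto

lemma counter_value_state: "j < N \<Longrightarrow> counter_value (state u t) j = real (t mod lam j)"
proof (cases quad)
  case True
  assume j: "j < N"
  have "t mod lam j < 2 ^ W"
    using lam_ge_2[OF j] lam_le_binary[OF True j] by (meson mod_less_divisor order_less_le_trans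
        zero_less_numeral order.strict_trans1 pos2)
  have "counter_value (state u t) j = (\<Sum>i<W. 2 ^ i * of_bool (bit (t mod lam j) i))"
    unfolding counter_value_def digit_value_def if_P[OF True]
    using state_counter_binary[OF True j] by (intro sum.cong) simp_all
  also have "\<dots> = real (t mod lam j)" using \<open>t mod lam j < 2 ^ W\<close> by (rule sum_bits)
  finally show ?thesis .
next
  case False
  assume j: "j < N"
  have lt: "t mod lam j < W"
    using lam_ge_2[OF j] lam_le_unary[OF False j] by (meson mod_less_divisor order_less_le_trans
        zero_less_numeral order.strict_trans1 pos2)
  have "counter_value (state u t) j = (\<Sum>i<W. if i = t mod lam j then real i else 0)"
    unfolding counter_value_def digit_value_def if_not_P[OF False]
    using state_counter_unary[OF False j] by (intro sum.cong) auto
  also have "\<dots> = real (t mod lam j)" using lt by (subst sum.delta) auto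
  finally show ?thesis .
qed

subsection \<open>Comparators, pulse and snapshot\<close>

lemma state_started: "state u t started_idx \<longleftrightarrow> 1 \<le> t"
  by (cases t) (simp_all add: state_Suc idx_less field_started)

lemma state_above: "j < N \<Longrightarrow> state u (Suc t) (above_idx j) \<longleftrightarrow> u j < t mod lam j"
  unfolding state_Suc[OF idx_less(2)] field_above role_of_simps(2) threshold.simps counter_value_state
  using of_nat_add_half_less_iff[of "u j" "t mod lam j"] by linarith

lemma state_below: "j < N \<Longrightarrow> state u (Suc t) (below_idx j) \<longleftrightarrow> t mod lam j < u j"
  unfolding state_Suc[OF idx_less(3)] field_below role_of_simps(3) threshold.simps counter_value_state
  using of_nat_add_half_less_iff[of "t mod lam j" "u j"] by linarith

lemma mismatch_count_state: "mismatch_count (state u (Suc t)) = real (code_distance N lam u t)"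
proof -
  have "mismatch_count s = (\<Sum>j<N. of_bool (s (above_idx j)) + of_bool (s (below_idx j)))" for s
  proof -
    have "mismatch_count s = (\<Sum>i\<in>{0..<N}. of_bool (s (above_idx 0 + i)))
        + (\<Sum>i\<in>{N..<N + N}. of_bool (s (above_idx 0 + i)))"
      unfolding mismatch_count_def
      by (subst sum.atLeastLessThan_concat) (simp_all add: lessThan_atLeast0 mult_2)
    thus ?thesis
      by (simp add: sum.distrib sum_shift_lessThan atLeast0LessThan above_idx_def below_idx_def
          algebra_simps del: sum_of_bool_eq)
  qed
  also have "(\<Sum>j<N. of_bool (state u (Suc t) (above_idx j)) + of_bool (state u (Suc t) (below_idx j)))
      = (\<Sum>j<N. of_bool (u j \<noteq> t mod lam j) :: real)"
    by (intro sum.cong) (auto simp: state_above state_below)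
  finally show ?thesis by (simp add: code_distance_def Int_def)
qed

lemma mismatch_count_bounds: "0 \<le> mismatch_count s" "mismatch_count s \<le> 2 * real N"
proof -
  show "0 \<le> mismatch_count s" by (simp add: mismatch_count_def)
  have "card ({..<2 * N} \<inter> {i. s (above_idx 0 + i)}) \<le> 2 * N"
    by (metis card_lessThan card_mono finite_lessThan inf_le1)
  thus "mismatch_count s \<le> 2 * real N" by (simp add: mismatch_count_def)
qed

lemma state_found: "state u t found_idx \<longleftrightarrow> (\<exists>s. s + 2 \<le> t \<and> code_distance N lam u s \<le> \<tau>)"
proof (induction t)
  case (Suc t)
  have field: "state u (Suc t) found_idx \<longleftrightarrow> latch_weight - real \<tau> - 1/2 <
      - mismatch_count (state u t) + 3 * latch_weight * of_bool (state u t found_idx)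
      + latch_weight * of_bool (state u t started_idx)"
    by (simp add: state_Suc idx_less field_found)
  have "real \<tau> \<le> real N" using tau_le_N by simp
  show ?case
  proof (cases "state u t found_idx")
    case True
    hence "state u (Suc t) found_idx"
      using field mismatch_count_bounds[of "state u t"] \<open>real \<tau> \<le> real N\<close>
      by (simp add: latch_weight_def)
    moreover have "\<exists>s. s + 2 \<le> Suc t \<and> code_distance N lam u s \<le> \<tau>"
      using True Suc.IH le_SucI by blast
    ultimately show ?thesis by simp
  next
    case False
    show ?thesis
    proof (cases t)
      case 0
      thus ?thesis using field \<open>real \<tau> \<le> real N\<close> by (simp add: mismatch_count_def latch_weight_def)
    next
      case (Suc t')
      have "state u (Suc t) found_idx \<longleftrightarrow> real (code_distance N lam u t') < real \<tau> + 1/2"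
        using field Suc False by (simp add: mismatch_count_state state_started) (intro iffI; linarith)
      also have "\<dots> \<longleftrightarrow> code_distance N lam u t' \<le> \<tau>" by (rule of_nat_less_add_half_iff)
      finally have "state u (Suc t) found_idx \<longleftrightarrow> code_distance N lam u t' \<le> \<tau>" .
      moreover have "(\<exists>s. s + 2 \<le> Suc t \<and> code_distance N lam u s \<le> \<tau>) \<longleftrightarrow> code_distance N lam u t' \<le> \<tau>"
        using False Suc.IH Suc by (auto simp: le_Suc_eq)
      ultimately show ?thesis by simp
    qed
  qed
qed simp

lemma state_pulse: "state u (Suc t) pulse_idx \<longleftrightarrow>
    1 \<le> t \<and> \<not> state u t found_idx \<and> code_distance N lam u (t - 1) \<le> \<tau>"
proof -
  have field: "state u (Suc t) pulse_idx \<longleftrightarrow> latch_weight - real \<tau> - 1/2 <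
      - mismatch_count (state u t) - latch_weight * of_bool (state u t found_idx)
      + latch_weight * of_bool (state u t started_idx)"
    by (simp add: state_Suc idx_less field_pulse)
  have "real \<tau> \<le> real N" using tau_le_N by simp
  show ?thesis
  proof (cases t)
    case 0
    thus ?thesis using field \<open>real \<tau> \<le> real N\<close> by (simp add: mismatch_count_def latch_weight_def)
  next
    case (Suc t')
    show ?thesis
    proof (cases "state u t found_idx")
      case True
      thus ?thesis using field mismatch_count_bounds[of "state u t"] \<open>real \<tau> \<le> real N\<close>
        by (simp add: latch_weight_def)
    next
      case False
      have "state u (Suc t) pulse_idx \<longleftrightarrow> real (code_distance N lam u t') < real \<tau> + 1/2"
        using field Suc False by (simp add: mismatch_count_state state_started) (intro iffI; linarith)
      also have "\<dots> \<longleftrightarrow> code_distance N lam u t' \<le> \<tau>" by (rule of_nat_less_add_half_iff)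
      finally show ?thesis using Suc False by simp
    qed
  qed
qed

lemma state_snapshot: "j < N \<Longrightarrow> i < W \<Longrightarrow>
    state u t (snapshot_idx j i) \<longleftrightarrow> (\<exists>s<t. state u s pulse_idx \<and> state u s (counter_idx j i))"
proof (induction t)
  case (Suc t)
  have "state u (Suc t) (snapshot_idx j i) \<longleftrightarrow> (3/2 :: real) < 2 * of_bool (state u t (snapshot_idx j i))
      + of_bool (state u t (counter_idx j i)) + of_bool (state u t pulse_idx)"
    using snapshot_idx_less[OF Suc.prems] by (simp add: state_Suc field_snapshot Suc.prems)
  also have "\<dots> \<longleftrightarrow> state u t (snapshot_idx j i) \<or> (state u t (counter_idx j i) \<and> state u t pulse_idx)"
    by (simp add: of_bool_def)
  finally show ?case using Suc.IH[OF Suc.prems] by (auto simp: less_Suc_eq)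
qed simp

end

section \<open>Correctness of the decoder\<close>

locale grid_decoder_crt = grid_decoder_wf +
  assumes coprime_lam: "\<And>i j. i < K \<Longrightarrow> j < K \<Longrightarrow> i \<noteq> j \<Longrightarrow> coprime (lam i) (lam j)"
    and E_mod_self: "\<And>i. i < K \<Longrightarrow> E i mod lam i = 1"
    and E_mod_other: "\<And>i i'. i < K \<Longrightarrow> i' < K \<Longrightarrow> i' \<noteq> i \<Longrightarrow> E i mod lam i' = 0"
    and R_ge_2: "2 \<le> R"
    and E_sum_le: "(\<Sum>i<K. E i * lam i) + R \<le> 2 ^ qbits * R"
    and R_le: "R \<le> 2 ^ xbits"

locale grid_decoder_input = grid_decoder_crt +
  fixes u :: "nat \<Rightarrow> nat" and x :: nat
  assumes x_less: "x < R" and close: "code_distance N lam u x \<le> \<tau>"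
    and far: "\<And>y. y < x \<Longrightarrow> \<tau> < code_distance N lam u y"
begin

text \<open>The comparators lag one step behind the counters, and the pulse one step behind the
  comparators.\<close>

lemma state_pulse_iff: "state u t pulse_idx \<longleftrightarrow> t = x + 2"
proof (cases t)
  case (Suc t1)
  have least: "(\<exists>s. s + 2 \<le> t1 \<and> code_distance N lam u s \<le> \<tau>) \<longleftrightarrow> x + 2 \<le> t1"
    using close far by (meson add_le_mono1 le_trans not_le)
  have "state u t pulse_idx \<longleftrightarrow> 1 \<le> t1 \<and> \<not> x + 2 \<le> t1 \<and> code_distance N lam u (t1 - 1) \<le> \<tau>"
    by (simp only: Suc state_pulse state_found least)
  also have "\<dots> \<longleftrightarrow> t1 = x + 1"
  proof
    assume h: "1 \<le> t1 \<and> \<not> x + 2 \<le> t1 \<and> code_distance N lam u (t1 - 1) \<le> \<tau>"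
    hence "\<not> t1 - 1 < x" using far[of "t1 - 1"] by auto
    thus "t1 = x + 1" using h by linarith
  qed (use close in simp)
  finally show ?thesis using Suc by simp
qed simp

lemma snapshot_value_state:
  "x + 2 < t \<Longrightarrow> j < N \<Longrightarrow> snapshot_value (state u t) j = real ((x + 2) mod lam j)"
proof -
  assume "x + 2 < t" "j < N"
  hence "snapshot_value (state u t) j = counter_value (state u (x + 2)) j"
    unfolding snapshot_value_def counter_value_def
    by (intro sum.cong) (simp_all add: state_snapshot state_pulse_iff)
  thus ?thesis using \<open>j < N\<close> by (simp add: counter_value_state)
qed

definition residue_sum :: nat where
  "residue_sum = (\<Sum>i<K. E i * ((x + 2) mod lam i))"

definition shifted_sum :: nat where
  "shifted_sum = residue_sum + R - 2"

definition quot :: nat where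
  "quot = shifted_sum div R"

definition remd :: nat where
  "remd = shifted_sum mod R"

lemma shifted_sum_eq: "shifted_sum = R * quot + remd"
  by (simp add: quot_def remd_def)

lemma crt_sum_state: "x + 2 < t \<Longrightarrow> crt_sum (state u t) = real shifted_sum - (real R - 2)"
proof -
  assume "x + 2 < t"
  have "crt_sum (state u t)
      = (\<Sum>i<K. \<Sum>k<W. real (E i) * (digit_value k * of_bool (state u t (snapshot_idx i k))))"
    unfolding crt_sum_def sum_lessThan_mult_blocks using W_pos
    by (intro sum.cong) (simp_all add: snapshot_idx_def algebra_simps del: sum_mult_of_bool_eq)
  also have "\<dots> = (\<Sum>i<K. real (E i) * snapshot_value (state u t) i)"
    by (simp add: snapshot_value_def sum_distrib_left del: sum_mult_of_bool_eq)
  also have "\<dots> = real residue_sum"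
    using \<open>x + 2 < t\<close> K_le_N by (simp add: residue_sum_def snapshot_value_state)
  finally show ?thesis using R_ge_2 by (simp add: shifted_sum_def of_nat_diff)
qed

lemma quot_less: "quot < 2 ^ qbits"
proof -
  have "(x + 2) mod lam i \<le> lam i" if "i < K" for i
  proof -
    have "0 < lam i" using that K_le_N by (meson lam_ge_2 less_le_trans pos2)
    thus ?thesis by (simp add: less_imp_le)
  qed
  hence "residue_sum \<le> (\<Sum>i<K. E i * lam i)"
    unfolding residue_sum_def by (intro sum_mono mult_le_mono2) simp
  hence "shifted_sum < 2 ^ qbits * R" using E_sum_le R_ge_2 by (simp add: shifted_sum_def)
  thus ?thesis by (simp add: quot_def less_mult_imp_div_less)
qed

lemma remd_less: "remd < 2 ^ xbits"
proof -
  have "remd < R" using R_ge_2 by (simp add: remd_def)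
  thus ?thesis using R_le by linarith
qed

lemma state_quot_bit: "b < qbits \<Longrightarrow> x + 3 + (qbits - b) \<le> t \<Longrightarrow> state u t (quot_idx b) = bit quot b"
proof (induction "qbits - b" arbitrary: b t rule: less_induct)
  case less
  obtain t' where t: "t = Suc t'" using less.prems by (cases t) auto
  have t': "x + 2 + (qbits - b) \<le> t'" using less.prems t by simp
  have higher: "state u t' (quot_idx b') = bit quot b'" if "b < b'" "b' < qbits" for b'
    using less.hyps[of b' t'] that t' less.prems by simp
  have "(\<Sum>b'<qbits. (if b < b' then - (real R * 2 ^ b') else 0) * of_bool (state u t' (quot_idx b')))
      = (\<Sum>b'<qbits. - real R * (if b < b' then 2 ^ b' * of_bool (bit quot b') else 0))"
    by (intro sum.cong) (auto simp: higher)
  also have "\<dots> = - real R * (\<Sum>b'<qbits. if b < b' then 2 ^ b' * of_bool (bit quot b') else 0)"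
    by (rule sum_distrib_left[symmetric])
  also have "\<dots> = - real R * (2 ^ (b + 1) * real (quot div 2 ^ (b + 1)))"
    by (simp add: sum_high_bits[OF quot_less less.prems(1)])
  finally have "field N net (quot_idx b) (activation u (state u t'))
      = real (R * quot + remd) - real R * (2 ^ (b + 1) * real (quot div 2 ^ (b + 1))) - (real R - 2)"
    using t' less.prems(1) by (simp add: field_quot_bit crt_sum_state shifted_sum_eq)
  hence "state u t (quot_idx b) \<longleftrightarrow> real R * 2 ^ b - 1/2 - (real R - 2)
      < real (R * quot + remd) - real R * (2 ^ (b + 1) * real (quot div 2 ^ (b + 1))) - (real R - 2)"
    using less.prems(1) by (simp add: t state_Suc idx_less)
  also have "\<dots> \<longleftrightarrow> real R * 2 ^ b - 1/2
      < real (R * quot + remd) - real R * (2 ^ (b + 1) * real (quot div 2 ^ (b + 1)))"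
    by (intro iffI) linarith+
  also have "\<dots> \<longleftrightarrow> bit quot b"
    using R_ge_2 by (intro greedy_division_bit) (simp add: remd_def)
  finally show ?case .
qed

lemma state_rem_bit: "b < xbits \<Longrightarrow> x + 3 + qbits + (xbits - b) \<le> t \<Longrightarrow> state u t (rem_idx b) = bit remd b"
proof (induction "xbits - b" arbitrary: b t rule: less_induct)
  case less
  obtain t' where t: "t = Suc t'" using less.prems by (cases t) auto
  have t': "x + 2 + qbits + (xbits - b) \<le> t'" using less.prems t by simp
  have higher: "state u t' (rem_idx b') = bit remd b'" if "b < b'" "b' < xbits" for b'
    using less.hyps[of b' t'] that t' less.prems by simp
  have "state u t' (quot_idx b') = bit quot b'" if "b' < qbits" for b'
    using t' less.prems that by (intro state_quot_bit) auto
  hence "(\<Sum>b'<qbits. - (real R * 2 ^ b') * of_bool (state u t' (quot_idx b')))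
      = - real R * (\<Sum>b'<qbits. 2 ^ b' * of_bool (bit quot b'))"
    by (simp add: sum_distrib_left mult_ac del: sum_mult_of_bool_eq)
  also have "\<dots> = - real R * real quot" by (simp only: sum_bits[OF quot_less])
  finally have quot_part: "(\<Sum>b'<qbits. - (real R * 2 ^ b') * of_bool (state u t' (quot_idx b')))
      = - real R * real quot" .
  have "(\<Sum>b'<xbits. (if b < b' then - (2 ^ b') else 0 :: real) * of_bool (state u t' (rem_idx b')))
      = (\<Sum>b'<xbits. - (if b < b' then 2 ^ b' * of_bool (bit remd b') else 0))"
    by (intro sum.cong) (auto simp: higher)
  also have "\<dots> = - (\<Sum>b'<xbits. if b < b' then 2 ^ b' * of_bool (bit remd b') else 0)"
    by (rule sum_negf)
  also have "\<dots> = - (2 ^ (b + 1) * real (remd div 2 ^ (b + 1)))"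
    by (simp add: sum_high_bits[OF remd_less less.prems(1)])
  finally have "field N net (rem_idx b) (activation u (state u t'))
      = real (1 * remd + 0) - real 1 * (2 ^ (b + 1) * real (remd div 2 ^ (b + 1))) - (real R - 2)"
    using t' less.prems(1) quot_part
    by (simp add: field_rem_bit crt_sum_state shifted_sum_eq)
  hence "state u t (rem_idx b) \<longleftrightarrow> 2 ^ b - 1/2 - (real R - 2)
      < real (1 * remd + 0) - real 1 * (2 ^ (b + 1) * real (remd div 2 ^ (b + 1))) - (real R - 2)"
    using less.prems(1) by (simp add: t state_Suc idx_less)
  also have "\<dots> \<longleftrightarrow> real 1 * 2 ^ b - 1/2
      < real (1 * remd + 0) - real 1 * (2 ^ (b + 1) * real (remd div 2 ^ (b + 1)))"
    by (intro iffI) linarith+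
  also have "\<dots> \<longleftrightarrow> bit remd b" by (intro greedy_division_bit) simp
  finally show ?case .
qed

lemma residue_sum_mod: "i < K \<Longrightarrow> residue_sum mod lam i = (x + 2) mod lam i"
proof -
  assume i: "i < K"
  define y where "y i' = (x + 2) mod lam i'" for i'
  have "residue_sum = E i * y i + (\<Sum>i'\<in>{..<K} - {i}. E i' * y i')"
    unfolding residue_sum_def y_def using i by (simp add: sum.remove)
  moreover have "lam i dvd (\<Sum>i'\<in>{..<K} - {i}. E i' * y i')"
    by (intro dvd_sum dvd_mult2) (use E_mod_other i in \<open>auto simp: mod_eq_0_iff_dvd\<close>)
  ultimately have "residue_sum mod lam i = (E i mod lam i * y i) mod lam i"
    by (simp add: mod_mult_left_eq flip: mod_add_right_eq)
  thus ?thesis using E_mod_self[OF i] by (simp add: y_def)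
qed

lemma remd_eq: "remd = x"
proof (rule cong_less_modulus_unique_nat)
  have "[shifted_sum = x] (mod lam i)" if "i < K" for i
  proof -
    have "shifted_sum + 2 = residue_sum + R" using R_ge_2 by (simp add: shifted_sum_def)
    hence "[shifted_sum + 2 = residue_sum + R] (mod lam i)" by simp
    also have "[residue_sum + R = x + 2] (mod lam i)"
      using residue_sum_mod[OF that] that
      by (simp add: cong_def R_def dvd_prodI mod_add_right_eq[symmetric, of residue_sum])
    finally show ?thesis by (rule cong_add_rcancel_nat[THEN iffD1])
  qed
  hence "[shifted_sum = x] (mod R)"
    unfolding R_def using coprime_lam by (intro coprime_cong_prod_nat) auto
  thus "[remd = x] (mod R)" by (simp add: remd_def cong_def)
  show "remd < R" "x < R" using R_ge_2 x_less by (simp_all add: remd_def)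
qed

theorem output_net_eq: "bnn_output N net u = x"
proof -
  have "bnn_output N net u = (\<Sum>b<xbits. if bit remd b then 2 ^ b else 0)"
    unfolding output_net using x_less by (intro sum.cong) (simp_all add: state_rem_bit)
  also have "\<dots> = x" using remd_less remd_eq by (simp add: sum_bits_nat)
  finally show ?thesis .
qed

end

section \<open>The decoders for given moduli\<close>

definition grid_moduli :: "nat \<Rightarrow> (nat \<Rightarrow> nat) \<Rightarrow> bool" where
  "grid_moduli N L \<longleftrightarrow> 2 \<le> L 0 \<and> (\<forall>i j. i < j \<longrightarrow> j < N \<longrightarrow> L i < L j)
     \<and> (\<forall>i j. i < N \<longrightarrow> j < N \<longrightarrow> i \<noteq> j \<longrightarrow> coprime (L i) (L j))"

lemma grid_moduli_add_le:
  assumes "grid_moduli N L" "i < N"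
  shows "L 0 + i \<le> L i"
  using assms(2)
proof (induction i)
  case (Suc i)
  thus ?case using assms(1) by (force simp: grid_moduli_def)
qed simp

lemma grid_moduli_ge_2:
  assumes "grid_moduli N L" "j < N"
  shows "2 \<le> L j"
  using grid_moduli_add_le[OF assms] assms(1) unfolding grid_moduli_def by linarith

lemma grid_moduli_le_last:
  assumes "grid_moduli N L" "i < N"
  shows "L i \<le> L (N - 1)"
  using assms by (cases "i = N - 1") (auto simp: grid_moduli_def less_imp_le)

definition crt_basis :: "(nat \<Rightarrow> nat) \<Rightarrow> nat \<Rightarrow> nat \<Rightarrow> nat" where
  "crt_basis L K i = (THE e. e < (\<Prod>i<K. L i) \<and> (\<forall>i'\<in>{..<K}. [e = of_bool (i' = i)] (mod L i')))"

lemma crt_basis: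
  assumes "\<And>i j. i < K \<Longrightarrow> j < K \<Longrightarrow> i \<noteq> j \<Longrightarrow> coprime (L i) (L j)"
    and "\<And>i. i < K \<Longrightarrow> L i \<noteq> 0"
  shows "crt_basis L K i < (\<Prod>i<K. L i)"
    and "\<And>i'. i' < K \<Longrightarrow> [crt_basis L K i = of_bool (i' = i)] (mod L i')"
proof -
  have "\<exists>!e. e < (\<Prod>i<K. L i) \<and> (\<forall>i'\<in>{..<K}. [e = of_bool (i' = i)] (mod L i'))"
    using assms by (intro chinese_remainder_unique_nat) auto
  from theI'[OF this] show "crt_basis L K i < (\<Prod>i<K. L i)"
    and "\<And>i'. i' < K \<Longrightarrow> [crt_basis L K i = of_bool (i' = i)] (mod L i')"
    unfolding crt_basis_def by auto
qed

lemma sum_mult_add_prod_le: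
  fixes E L :: "nat \<Rightarrow> nat"
  assumes "\<And>i. i < K \<Longrightarrow> E i < (\<Prod>i<K. L i)" "\<And>i. i < K \<Longrightarrow> L i \<le> M" "K * M < P"
  shows "(\<Sum>i<K. E i * L i) + (\<Prod>i<K. L i) \<le> P * (\<Prod>i<K. L i)"
proof -
  have "(\<Sum>i<K. E i * L i) \<le> (\<Sum>i<K. (\<Prod>i<K. L i) * M)"
    using assms(1,2) by (intro sum_mono mult_mono) (auto intro: less_imp_le)
  hence "(\<Sum>i<K. E i * L i) + (\<Prod>i<K. L i) \<le> (K * M + 1) * (\<Prod>i<K. L i)"
    by (simp add: algebra_simps)
  also have "\<dots> \<le> P * (\<Prod>i<K. L i)" using assms(3) by (intro mult_le_mono1) simp
  finally show ?thesis .
qed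

text \<open>\<open>B = floorlog 2 \<lambda>\<^sub>N\<close> is the number of binary digits of the largest modulus. The quotient
  bits must cover \<open>(\<Sigma>\<^sub>i E\<^sub>i \<lambda>\<^sub>i) / R\<^sub>l < K \<lambda>\<^sub>N < 2\<^sup>2\<^sup>B\<close>, the remainder bits \<open>R\<^sub>l < 2\<^sup>K\<^sup>B\<close>.\<close>

definition counter_width :: "bool \<Rightarrow> (nat \<Rightarrow> nat) \<Rightarrow> nat \<Rightarrow> nat" where
  "counter_width quad L N = (if quad then floorlog 2 (L (N - 1)) else L (N - 1))"

definition decoder_net :: "bool \<Rightarrow> nat \<Rightarrow> (nat \<Rightarrow> nat) \<Rightarrow> nat \<Rightarrow> bnn" where
  "decoder_net quad N L K = grid_decoder.net quad N L K (counter_width quad L N)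
     (2 * floorlog 2 (L (N - 1))) (K * floorlog 2 (L (N - 1))) (crt_basis L K) ((N - K) div 2)"

lemma nn_decoder_net: "nn (decoder_net quad N L K) =
    2 * N * counter_width quad L N + 3 * N + 3 + 2 * floorlog 2 (L (N - 1)) + K * floorlog 2 (L (N - 1))"
  by (simp add: decoder_net_def grid_decoder.nn_net grid_decoder.num_neurons_def
      grid_decoder.started_idx_def)

lemma linear_decoder_net: "linear_bnn (decoder_net False N L K)"
  unfolding decoder_net_def by (rule grid_decoder.linear_net) simp

lemma grid_decoder_crt_decoder_net:
  assumes L: "grid_moduli N L" and K: "1 \<le> K" "K \<le> N"
  shows "grid_decoder_crt quad N L K (counter_width quad L N) (2 * floorlog 2 (L (N - 1)))
    (K * floorlog 2 (L (N - 1))) (crt_basis L K) ((N - K) div 2)"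
proof -
  define B where "B = floorlog 2 (L (N - 1))"
  define R where "R = (\<Prod>i<K. L i)"
  note L_ge_2 = grid_moduli_ge_2[OF L] and L_le = grid_moduli_le_last[OF L]
  have N_le: "N \<le> L (N - 1)" using grid_moduli_add_le[OF L, of "N - 1"] L_ge_2[of 0] K by simp
  have B: "L (N - 1) < 2 ^ B" "1 \<le> B"
    using floorlog_bounds[of "L (N - 1)" 2] N_le K by (auto simp: B_def floorlog_def)
  have copr: "coprime (L i) (L j)" if "i < K" "j < K" "i \<noteq> j" for i j
    using L that K by (simp add: grid_moduli_def)
  have L_nonzero: "L i \<noteq> 0" if "i < K" for i using L_ge_2[of i] that K by simp
  have E: "crt_basis L K i < R" "\<And>i'. i' < K \<Longrightarrow> [crt_basis L K i = of_bool (i' = i)] (mod L i')"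
    for i using crt_basis[where K = K and L = L and i = i, OF copr L_nonzero] by (auto simp: R_def)
  have "L 0 dvd R" using K by (simp add: R_def dvd_prodI)
  moreover have "0 < R" using L_nonzero by (simp add: R_def prod_pos)
  ultimately have "2 \<le> R" using L_ge_2[of 0] K dvd_imp_le[of "L 0" R] by simp
  moreover have "K * L (N - 1) < 2 ^ (2 * B)"
    using K N_le B mult_strict_mono[of K "2 ^ B" "L (N - 1)" "2 ^ B"] by (simp add: mult_2 power_add)
  hence "(\<Sum>i<K. crt_basis L K i * L i) + R \<le> 2 ^ (2 * B) * R"
    unfolding R_def using E(1) L_le K by (intro sum_mult_add_prod_le) (auto simp: R_def)
  moreover have "R \<le> (\<Prod>i<K. 2 ^ B)"
    unfolding R_def using L_le B K by (intro prod_mono) (auto intro: le_trans[OF L_le less_imp_le])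
  hence "R \<le> 2 ^ (K * B)" by (simp add: power_mult[symmetric] mult.commute)
  ultimately show ?thesis
  proof unfold_locales
    show "0 < counter_width quad L N"
      using B L_ge_2[of "N - 1"] K by (simp add: counter_width_def B_def)
    show "L j \<le> 2 ^ counter_width quad L N" if "quad" "j < N" for j
      using L_le[OF that(2)] B that(1) by (simp add: counter_width_def B_def)
    show "crt_basis L K i mod L i = 1" if "i < K" for i
      using E(2)[OF that, of i] L_ge_2[of i] that K by (simp add: cong_def)
    show "crt_basis L K i mod L i' = 0" if "i < K" "i' < K" "i' \<noteq> i" for i i'
      using E(2)[OF that(2), of i] that by (simp add: cong_def)
  qed (use K L_ge_2 L_le copr in \<open>simp_all add: counter_width_def B_def R_def grid_decoder.R_def\<close>)
qed

lemma success_prob_decoder_net: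
  assumes L: "grid_moduli N L" and K: "1 \<le> K" "K \<le> N"
    and eps: "0 \<le> eps" "eps \<le> 1" and margin: "eps * N \<le> real ((N - K) div 2) + 1"
    and x: "x < (\<Prod>i<K. L i)"
  shows "1 - exp (-2 * (real ((N - K) div 2) + 1 - eps * N)\<^sup>2 / N)
    \<le> success_prob eps N L (decoder_net quad N L K) x"
proof -
  define \<tau> where "\<tau> = (N - K) div 2"
  interpret grid_decoder_crt quad N L K "counter_width quad L N" "2 * floorlog 2 (L (N - 1))"
    "K * floorlog 2 (L (N - 1))" "crt_basis L K" \<tau>
    unfolding \<tau>_def by (rule grid_decoder_crt_decoder_net[OF L K])
  have pos: "\<forall>j<N. 0 < L j" using less_le_trans[OF pos2 lam_ge_2] by blast
  have "{u. code_distance N L u x \<le> \<tau>} \<subseteq> {u. bnn_output N (decoder_net quad N L K) u = x}"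
  proof
    fix u assume "u \<in> {u. code_distance N L u x \<le> \<tau>}"
    hence close: "code_distance N L u x \<le> \<tau>" by simp
    have far: "\<tau> < code_distance N L u y" if "y < x" for y
      using L pos that x K close
      by (intro code_distance_gt_if_close[of N L]) (auto simp: grid_moduli_def \<tau>_def)
    interpret grid_decoder_input quad N L K "counter_width quad L N" "2 * floorlog 2 (L (N - 1))"
      "K * floorlog 2 (L (N - 1))" "crt_basis L K" \<tau> u x
      using x close far by unfold_locales (simp_all add: R_def)
    show "u \<in> {u. bnn_output N (decoder_net quad N L K) u = x}"
      using output_net_eq by (simp add: decoder_net_def \<tau>_def)
  qed
  hence "measure_pmf.prob (noisy_code eps N L x) {u. code_distance N L u x \<le> \<tau>}
      \<le> success_prob eps N L (decoder_net quad N L K) x"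
    unfolding success_prob_def by (intro measure_pmf.finite_measure_mono) simp_all
  moreover have "measure_pmf.prob (noisy_code eps N L x) {u. code_distance N L u x \<le> \<tau>}
      = 1 - measure_pmf.prob (noisy_code eps N L x) {u. \<tau> < code_distance N L u x}"
    using measure_pmf.prob_compl[of "{u. \<tau> < code_distance N L u x}" "noisy_code eps N L x"]
    by (simp add: Compl_eq_Diff_UNIV[symmetric] Collect_neg_eq[symmetric] not_less)
  moreover have "measure_pmf.prob (noisy_code eps N L x) {u. \<tau> < code_distance N L u x}
      \<le> exp (-2 * (real \<tau> + 1 - eps * N)\<^sup>2 / N)"
    using eps pos K margin by (intro noisy_code_distance_tail) (auto simp: \<tau>_def)
  ultimately show ?thesis by (simp add: \<tau>_def)
qed

section \<open>Asymptotics\<close>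

lemma one_le_ln: "3 \<le> (y::real) \<Longrightarrow> 1 \<le> ln y"
  using exp_le by (subst ln_ge_iff) auto

lemma bits_le_ln:
  fixes m B :: nat and C c y :: real
  assumes m: "1 \<le> m" "2 ^ (B - 1) \<le> m" "real m \<le> C * y powr (1 + c)"
    and C: "1 \<le> C" and c: "c \<le> 1" and y: "3 \<le> y"
  shows "real B \<le> (1 + (ln C + 2) / ln 2) * ln y"
proof -
  have ln_y: "1 \<le> ln y" using one_le_ln[OF y] .
  have "real (B - 1) * ln 2 = ln ((2::real) ^ (B - 1))" by (simp add: ln_realpow)
  also have "\<dots> \<le> ln (real m)"
  proof -
    have "real (2 ^ (B - 1)) \<le> real m" using m(2) by (rule of_nat_mono)
    thus ?thesis using m(1) by (subst ln_le_cancel_iff) auto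
  qed
  also have "\<dots> \<le> ln (C * y powr (1 + c))"
    using m(1,3) by (subst ln_le_cancel_iff) auto
  also have "\<dots> = ln C + (1 + c) * ln y" using C y by (simp add: ln_mult ln_powr)
  also have "\<dots> \<le> ln C + 2 * ln y" using c ln_y by (intro add_left_mono mult_right_mono) auto
  also have "\<dots> \<le> (ln C + 2) * ln y" using C ln_y by (simp add: algebra_simps mult_le_cancel_left1)
  finally have "real (B - 1) \<le> (ln C + 2) * ln y / ln 2" by (simp add: field_simps)
  hence "real B \<le> 1 + (ln C + 2) * ln y / ln 2" by linarith
  also have "\<dots> \<le> (1 + (ln C + 2) / ln 2) * ln y" using ln_y by (simp add: algebra_simps)
  finally show ?thesis .
qed

lemma nn_decoder_net_binary_le:
  assumes L: "grid_moduli N L" and K: "1 \<le> K" "K \<le> N" and N: "3 \<le> N"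
    and last: "real (L (N - 1)) \<le> C * real N powr (1 + c)" and C: "1 \<le> C" and c: "c \<le> 1"
  shows "real (nn (decoder_net True N L K)) \<le> 11 * (1 + (ln C + 2) / ln 2) * real N * ln (real N)"
proof -
  define B where "B = floorlog 2 (L (N - 1))"
  have "1 \<le> L (N - 1)"
    using grid_moduli_add_le[OF L, of "N - 1"] N by simp
  hence B: "2 ^ (B - 1) \<le> L (N - 1)" "1 \<le> B"
    using floorlog_bounds[of "L (N - 1)" 2] by (auto simp: B_def floorlog_def)
  have "nn (decoder_net True N L K) = 2 * (N * B) + 3 * N + 3 + 2 * B + K * B"
    unfolding nn_decoder_net counter_width_def B_def by simp
  moreover have "N \<le> N * B" "1 \<le> N * B" "B \<le> N * B" "K * B \<le> N * B"
    using B K N by simp_all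
  ultimately have "nn (decoder_net True N L K) \<le> 11 * N * B" by linarith
  hence "real (nn (decoder_net True N L K)) \<le> 11 * real N * real B"
    by (metis of_nat_le_iff of_nat_mult of_nat_numeral)
  also have "\<dots> \<le> 11 * real N * ((1 + (ln C + 2) / ln 2) * ln (real N))"
    using bits_le_ln[OF \<open>1 \<le> L (N - 1)\<close> B(1) last C c] N by (intro mult_left_mono) auto
  finally show ?thesis by (simp add: mult_ac)
qed

lemma nn_decoder_net_unary_le:
  assumes L: "grid_moduli N L" and K: "1 \<le> K" "K \<le> N" and N: "3 \<le> N"
    and last: "real (L (N - 1)) \<le> C * real N powr (1 + c)" and C: "1 \<le> C" and c: "0 \<le> c"
  shows "real (nn (decoder_net False N L K)) \<le> 11 * C * real N powr (2 + 2 * c) * ln (real N)"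
proof -
  define m where "m = L (N - 1)"
  have "1 \<le> m" using grid_moduli_add_le[OF L, of "N - 1"] N by (simp add: m_def)
  hence "2 ^ (floorlog 2 m - 1) \<le> m" using floorlog_bounds[of m 2] by simp
  moreover have "floorlog 2 m - 1 < 2 ^ (floorlog 2 m - 1)" by (rule less_exp)
  ultimately have "floorlog 2 m \<le> m" by linarith
  moreover have "nn (decoder_net False N L K) = 2 * (N * m) + 3 * N + 3 + 2 * floorlog 2 m + K * floorlog 2 m"
    unfolding nn_decoder_net counter_width_def m_def by simp
  moreover have "N \<le> N * m" "1 \<le> N * m" "m \<le> N * m" "K * floorlog 2 m \<le> N * m"
    using \<open>1 \<le> m\<close> \<open>floorlog 2 m \<le> m\<close> K N by (simp_all add: mult_le_mono)
  ultimately have "nn (decoder_net False N L K) \<le> 11 * N * m" by linarith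
  hence "real (nn (decoder_net False N L K)) \<le> 11 * real N * real m"
    by (metis of_nat_le_iff of_nat_mult of_nat_numeral)
  also have "\<dots> \<le> 11 * real N * (C * real N powr (1 + c))"
    using last by (intro mult_left_mono) (simp_all add: m_def)
  also have "\<dots> = 11 * C * real N powr (2 + c)"
    using N by (simp add: powr_add[of "real N" 1 "1 + c", simplified] mult_ac)
  also have "\<dots> \<le> 11 * C * real N powr (2 + 2 * c)"
    using c C N by (intro mult_left_mono powr_mono) auto
  also have "\<dots> \<le> 11 * C * real N powr (2 + 2 * c) * ln (real N)"
    using mult_left_mono[OF one_le_ln[of "real N"], of "11 * C * real N powr (2 + 2 * c)"] N C
    by simp
  finally show ?thesis .
qed

lemma success_prob_decoder_net_ge:
  assumes L: "grid_moduli N L" and K: "1 \<le> K" "K \<le> N" and "0 < N"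
    and eps: "0 \<le> eps" and \<gamma>: "0 < \<gamma>" and K_le: "real K \<le> (1 - 2 * eps - 2 * \<gamma>) * real N"
    and x: "x < (\<Prod>i<K. L i)"
  shows "1 - exp (- 2 * \<gamma>\<^sup>2 * real N) \<le> success_prob eps N L (decoder_net quad N L K) x"
proof -
  define t where "t = real ((N - K) div 2) + 1 - eps * N"
  have "real (N - K) \<le> 2 * real ((N - K) div 2) + 1" by linarith
  hence "\<gamma> * real N \<le> t" using K K_le by (simp add: t_def of_nat_diff algebra_simps)
  moreover have "0 \<le> \<gamma> * real N" using \<gamma> by simp
  ultimately have "(\<gamma> * real N)\<^sup>2 \<le> t\<^sup>2" by (intro power_mono)
  hence "- 2 * t\<^sup>2 / N \<le> - 2 * \<gamma>\<^sup>2 * real N" using \<open>0 < N\<close> by (simp add: field_simps power2_eq_square)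
  hence "exp (- 2 * t\<^sup>2 / N) \<le> exp (- 2 * \<gamma>\<^sup>2 * real N)" by simp
  moreover have "0 < (1 - 2 * eps - 2 * \<gamma>) * real N" using K_le K by simp
  hence "eps \<le> 1" using \<open>0 < N\<close> \<gamma> by (simp add: zero_less_mult_iff)
  hence "1 - exp (-2 * t\<^sup>2 / N) \<le> success_prob eps N L (decoder_net quad N L K) x"
    unfolding t_def using L K eps \<open>\<gamma> * real N \<le> t\<close> \<open>0 \<le> \<gamma> * real N\<close> x
    by (intro success_prob_decoder_net) (simp_all add: t_def)
  ultimately show ?thesis by linarith
qed

lemma noise_bound_lt_half:
  fixes c \<rho> :: real
  assumes "0 < c" "\<rho> < 1"
  shows "(1 - \<rho>) * c / (1 + c)\<^sup>2 < (1 - \<rho>) / 2"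
proof -
  have "2 * c < (1 + c)\<^sup>2" using assms by (simp add: power2_eq_square algebra_simps)
    (metis add_pos_pos mult_pos_pos zero_less_one)
  hence "c / (1 + c)\<^sup>2 < 1 / 2" using assms by (simp add: field_simps)
  hence "(1 - \<rho>) * (c / (1 + c)\<^sup>2) < (1 - \<rho>) * (1 / 2)"
    using assms by (intro mult_strict_left_mono) auto
  thus ?thesis by simp
qed

lemma eventually_ge_if_powr_le:
  fixes b c c1 :: real
  assumes "0 < b" "0 < c" "0 < c1" "\<forall>\<^sub>F N in sequentially. c1 * real N powr c \<le> f N"
  shows "\<forall>\<^sub>F N in sequentially. b \<le> f N"
proof -
  have "\<forall>\<^sub>F N in sequentially. (b / c1) powr (1 / c) \<le> real N"
    by (rule eventually_sequentiallyI[of "nat \<lceil>(b / c1) powr (1 / c)\<rceil>"]) linarith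
  with assms(4) show ?thesis
  proof eventually_elim
    case (elim N)
    have "b / c1 = ((b / c1) powr (1 / c)) powr c" using assms by (simp add: powr_powr)
    also have "\<dots> \<le> real N powr c" using elim(2) assms by (intro powr_mono2) auto
    finally show ?case using elim(1) assms by (simp add: field_simps)
  qed
qed

lemma eventually_grid_moduli:
  assumes "\<forall>\<^sub>F N in sequentially. 2 \<le> real (lam N 0)"
    and "\<And>N i j. 1 \<le> N \<Longrightarrow> i < j \<Longrightarrow> j < N \<Longrightarrow> lam N i < lam N j"
    and "\<And>N i j. 1 \<le> N \<Longrightarrow> i < N \<Longrightarrow> j < N \<Longrightarrow> i \<noteq> j \<Longrightarrow> coprime (lam N i) (lam N j)"
  shows "\<forall>\<^sub>F N in sequentially. grid_moduli N (lam N)"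
  using assms(1) eventually_ge_at_top[of 1]
  by eventually_elim (use assms(2,3) in \<open>auto simp: grid_moduli_def\<close>)

lemma decoder_nets_at:
  assumes C: "1 \<le> C" and c: "0 \<le> c" "c \<le> 1" and eps: "0 \<le> eps" and \<gamma>: "0 < \<gamma>"
  shows "grid_moduli N L \<and> 1 \<le> K \<and> K \<le> N \<and> real K \<le> (1 - 2 * eps - 2 * \<gamma>) * real N \<and> 3 \<le> N
      \<and> real (L (N - 1)) \<le> C * real N powr (1 + c) \<Longrightarrow>
    (real (nn (decoder_net True N L K)) \<le> 11 * (1 + (ln C + 2) / ln 2) * real N * ln (real N)
     \<and> (\<forall>x < (\<Prod>i<K. L i). success_prob eps N L (decoder_net True N L K) x \<ge> 1 - exp (- 2 * \<gamma>\<^sup>2 * real N)))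
    \<and> (linear_bnn (decoder_net False N L K)
     \<and> real (nn (decoder_net False N L K)) \<le> 11 * C * real N powr (2 + 2 * c) * ln (real N)
     \<and> (\<forall>x < (\<Prod>i<K. L i). success_prob eps N L (decoder_net False N L K) x \<ge> 1 - exp (- 2 * \<gamma>\<^sup>2 * real N)))"
  using nn_decoder_net_binary_le[of N L K C c] linear_decoder_net nn_decoder_net_unary_le[of N L K C c]
    success_prob_decoder_net_ge[of N L K eps \<gamma>] assms
  by simp

lemma eventually_le_const_ge_1:
  fixes f g :: "'a \<Rightarrow> real"
  assumes "\<exists>C. \<forall>\<^sub>F x in F. f x \<le> C * g x" and "\<And>x. 0 \<le> g x"
  shows "\<exists>C \<ge> 1. \<forall>\<^sub>F x in F. f x \<le> C * g x"
proof -
  obtain C where "\<forall>\<^sub>F x in F. f x \<le> C * g x" using assms(1) by blast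
  hence "\<forall>\<^sub>F x in F. f x \<le> max C 1 * g x"
    by (rule eventually_mono) (smt (verit) mult_right_mono assms(2) max.cobounded1)
  thus ?thesis by (intro exI[of _ "max C 1"]) simp
qed

theorem theorem2:
  fixes lam :: "nat \<Rightarrow> nat \<Rightarrow> nat" and K :: "nat \<Rightarrow> nat"
    and c \<rho> eps :: real
  assumes c: "0 < c" "c < 1"
    and pos: "\<And>N i. 1 \<le> N \<Longrightarrow> i < N \<Longrightarrow> 0 < lam N i"
    and incr: "\<And>N i j. 1 \<le> N \<Longrightarrow> i < j \<Longrightarrow> j < N \<Longrightarrow> lam N i < lam N j"
    and copr: "\<And>N i j. 1 \<le> N \<Longrightarrow> i < N \<Longrightarrow> j < N \<Longrightarrow> i \<noteq> j \<Longrightarrow> coprime (lam N i) (lam N j)"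
    and first_order: "\<exists>c1 c2. 0 < c1 \<and> 0 < c2 \<and>
        (\<forall>\<^sub>F N in sequentially. c1 * real N powr c \<le> real (lam N 0) \<and> real (lam N 0) \<le> c2 * real N powr c)"
    and last_bound: "\<exists>C. \<forall>\<^sub>F N in sequentially. real (lam N (N - 1)) \<le> C * real N powr (1 + c)"
    and Krange: "\<And>N. 1 \<le> N \<Longrightarrow> 1 \<le> K N \<and> K N \<le> N"
    and \<rho>: "0 < \<rho>" "\<rho> < 1"
    and Klim: "(\<lambda>N. real (K N) / real N) \<longlonglongrightarrow> \<rho>"
    and eps: "0 \<le> eps" "eps \<le> (1 - \<rho>) * c / (1 + c)^2"
  shows
    "(\<exists>net :: nat \<Rightarrow> bnn. \<exists>C \<delta>. \<delta> \<longlonglongrightarrow> 0 \<and>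
       (\<forall>\<^sub>F N in sequentially.
          real (nn (net N)) \<le> C * real N * ln (real N) \<and>
          (\<forall>x < (\<Prod>i<K N. lam N i). success_prob eps N (lam N) (net N) x \<ge> 1 - \<delta> N)))
   \<and> (\<exists>net :: nat \<Rightarrow> bnn. \<exists>C \<delta>. \<delta> \<longlonglongrightarrow> 0 \<and>
       (\<forall>\<^sub>F N in sequentially.
          linear_bnn (net N) \<and>
          real (nn (net N)) \<le> C * real N powr (2 + 2 * c) * ln (real N) \<and>
          (\<forall>x < (\<Prod>i<K N. lam N i). success_prob eps N (lam N) (net N) x \<ge> 1 - \<delta> N)))"
proof -
  obtain c1 c2 where "0 < c1" "\<forall>\<^sub>F N in sequentially.
      c1 * real N powr c \<le> real (lam N 0) \<and> real (lam N 0) \<le> c2 * real N powr c"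
    using first_order by blast
  hence moduli: "\<forall>\<^sub>F N in sequentially. grid_moduli N (lam N)"
    using c incr copr by (intro eventually_grid_moduli eventually_ge_if_powr_le[of 2 c c1])
      (auto elim: eventually_mono)
  obtain C where C: "1 \<le> C"
    and last: "\<forall>\<^sub>F N in sequentially. real (lam N (N - 1)) \<le> C * real N powr (1 + c)"
    using eventually_le_const_ge_1[OF last_bound] by auto
  define \<gamma> where "\<gamma> = ((1 - \<rho>) / 2 - eps) / 2"
  have "eps < (1 - \<rho>) / 2" using noise_bound_lt_half[OF c(1) \<rho>(2)] eps(2) by linarith
  hence \<gamma>: "0 < \<gamma>" and "\<rho> < 1 - 2 * eps - 2 * \<gamma>" by (simp_all add: \<gamma>_def field_simps)
  hence "\<forall>\<^sub>F N in sequentially. real (K N) / real N < 1 - 2 * eps - 2 * \<gamma>"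
    by (intro order_tendstoD(2)[OF Klim])
  with moduli last have "\<forall>\<^sub>F N in sequentially. grid_moduli N (lam N) \<and> 1 \<le> K N \<and> K N \<le> N
      \<and> real (K N) \<le> (1 - 2 * eps - 2 * \<gamma>) * real N \<and> 3 \<le> N
      \<and> real (lam N (N - 1)) \<le> C * real N powr (1 + c)"
    using eventually_ge_at_top[of 3] by eventually_elim (use Krange in \<open>auto simp: divide_less_eq\<close>)
  moreover have "(\<lambda>N. exp (- 2 * \<gamma>\<^sup>2 * real N)) \<longlonglongrightarrow> 0" using \<gamma> by real_asymp
  ultimately show ?thesis
    using decoder_nets_at[OF C less_imp_le[OF c(1)] less_imp_le[OF c(2)] eps(1) \<gamma>]
    by (intro conjI exI) (auto elim!: eventually_mono)
qed

end
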